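(* Let $X$ be a Tychonoff space. (a) If $X$ has a $\sigma$-disjoint base consisting of cozero-sets, then $X$ can be embedded in a uniform Eberlein compact. (b) If $X$ has a $\sigma$-strongly point-finite base consisting of cozero-sets, then $X$ can be embedded in an Eberlein compact.
   Context: A cozero-set of $X$ is a set $X\setminus f^{-1}(0)$ for a continuous $f:X\to[0,1]$. A family of subsets of a set is strongly point-finite if every countably infinite subfamily contains a finite subfamily with empty intersection; $\sigma$-strongly point-finite means a countable union of such families. An Eberlein compact is a compact Hausdorff space homeomorphic to a weakly compact subset of a Banach space; a uniform Eberlein compact is one homeomorphic to a weakly compact subset of a Hilbert space. *)

theory Defs
  imports "HOL-Analysis.Analysis"
begin

definition tychonoff_space :: "'a topology \<Rightarrow> bool" where
  "tychonoff_space X \<longleftrightarrow> completely_regular_space X \<and> Hausdorff_space X"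

definition cozero_set :: "'a topology \<Rightarrow> 'a set \<Rightarrow> bool" where
  "cozero_set X U \<longleftrightarrow>
     (\<exists>f::'a \<Rightarrow> real. continuous_map X (top_of_set {0..1}) f \<and>
        U = topspace X - {x \<in> topspace X. f x = 0})"

definition is_base :: "'a topology \<Rightarrow> 'a set set \<Rightarrow> bool" where
  "is_base X B \<longleftrightarrow> (\<forall>V\<in>B. openin X V) \<and>
     (\<forall>U. openin X U \<longrightarrow> (\<exists>B'. B' \<subseteq> B \<and> \<Union>B' = U))"

definition strongly_point_finite :: "'a set set \<Rightarrow> bool" where
  "strongly_point_finite F \<longleftrightarrow>
     (\<forall>C. C \<subseteq> F \<and> countable C \<and> infinite C \<longrightarrow>
        (\<exists>D. D \<subseteq> C \<and> finite D \<and> \<Inter>D = {}))"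

definition sigma_disjoint :: "'a set set \<Rightarrow> bool" where
  "sigma_disjoint B \<longleftrightarrow>
     (\<exists>F :: nat \<Rightarrow> 'a set set. B = (\<Union>n. F n) \<and> (\<forall>n. disjoint (F n)))"

definition sigma_strongly_point_finite :: "'a set set \<Rightarrow> bool" where
  "sigma_strongly_point_finite B \<longleftrightarrow>
     (\<exists>F :: nat \<Rightarrow> 'a set set. B = (\<Union>n. F n) \<and> (\<forall>n. strongly_point_finite (F n)))"

text \<open>A (real) Banach space is represented by a linear subspace V of the real vector
  space of all functions 'i => real (pointwise operations) together with a complete
  norm on V. Every Banach space whose Hamel dimension is at most that of
  'i => real is linearly isometric to such a representation.\<close>

definition vadd :: "('i \<Rightarrow> real) \<Rightarrow> ('i \<Rightarrow> real) \<Rightarrow> ('i \<Rightarrow> real)" where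
  "vadd x y = (\<lambda>t. x t + y t)"

definition vscale :: "real \<Rightarrow> ('i \<Rightarrow> real) \<Rightarrow> ('i \<Rightarrow> real)" where
  "vscale c x = (\<lambda>t. c * x t)"

definition vdiff :: "('i \<Rightarrow> real) \<Rightarrow> ('i \<Rightarrow> real) \<Rightarrow> ('i \<Rightarrow> real)" where
  "vdiff x y = (\<lambda>t. x t - y t)"

definition linear_subspace :: "('i \<Rightarrow> real) set \<Rightarrow> bool" where
  "linear_subspace V \<longleftrightarrow> (\<lambda>t. 0) \<in> V \<and>
     (\<forall>x\<in>V. \<forall>y\<in>V. vadd x y \<in> V) \<and> (\<forall>c. \<forall>x\<in>V. vscale c x \<in> V)"

definition normed_space_on :: "('i \<Rightarrow> real) set \<Rightarrow> (('i \<Rightarrow> real) \<Rightarrow> real) \<Rightarrow> bool" where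
  "normed_space_on V N \<longleftrightarrow> linear_subspace V \<and>
     (\<forall>x\<in>V. N x \<ge> 0) \<and> (\<forall>x\<in>V. N x = 0 \<longrightarrow> x = (\<lambda>t. 0)) \<and>
     (\<forall>c. \<forall>x\<in>V. N (vscale c x) = \<bar>c\<bar> * N x) \<and>
     (\<forall>x\<in>V. \<forall>y\<in>V. N (vadd x y) \<le> N x + N y)"

definition banach_space_on :: "('i \<Rightarrow> real) set \<Rightarrow> (('i \<Rightarrow> real) \<Rightarrow> real) \<Rightarrow> bool" where
  "banach_space_on V N \<longleftrightarrow> normed_space_on V N \<and>
     (\<forall>s::nat \<Rightarrow> ('i \<Rightarrow> real). (\<forall>n. s n \<in> V) \<and>
        (\<forall>e>0. \<exists>M. \<forall>m\<ge>M. \<forall>n\<ge>M. N (vdiff (s m) (s n)) < e) \<longrightarrow>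
        (\<exists>x\<in>V. (\<lambda>n. N (vdiff (s n) x)) \<longlonglongrightarrow> 0))"

definition hilbert_space_on :: "('i \<Rightarrow> real) set \<Rightarrow> (('i \<Rightarrow> real) \<Rightarrow> ('i \<Rightarrow> real) \<Rightarrow> real) \<Rightarrow> bool" where
  "hilbert_space_on V ip \<longleftrightarrow> linear_subspace V \<and>
     (\<forall>x\<in>V. \<forall>y\<in>V. ip x y = ip y x) \<and>
     (\<forall>x\<in>V. \<forall>y\<in>V. \<forall>z\<in>V. ip (vadd x y) z = ip x z + ip y z) \<and>
     (\<forall>c. \<forall>x\<in>V. \<forall>y\<in>V. ip (vscale c x) y = c * ip x y) \<and>
     (\<forall>x\<in>V. ip x x \<ge> 0) \<and> (\<forall>x\<in>V. ip x x = 0 \<longrightarrow> x = (\<lambda>t. 0)) \<and>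
     banach_space_on V (\<lambda>x. sqrt (ip x x))"

definition bounded_linear_functional_on ::
    "('i \<Rightarrow> real) set \<Rightarrow> (('i \<Rightarrow> real) \<Rightarrow> real) \<Rightarrow> (('i \<Rightarrow> real) \<Rightarrow> real) \<Rightarrow> bool" where
  "bounded_linear_functional_on V N f \<longleftrightarrow>
     (\<forall>x\<in>V. \<forall>y\<in>V. f (vadd x y) = f x + f y) \<and>
     (\<forall>c. \<forall>x\<in>V. f (vscale c x) = c * f x) \<and>
     (\<exists>C. \<forall>x\<in>V. \<bar>f x\<bar> \<le> C * N x)"

definition weak_topology ::
    "('i \<Rightarrow> real) set \<Rightarrow> (('i \<Rightarrow> real) \<Rightarrow> real) \<Rightarrow> ('i \<Rightarrow> real) topology" where
  "weak_topology V N = topology_generated_by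
     {{x \<in> V. f x \<in> U} | f U. bounded_linear_functional_on V N f \<and> open U}"

definition embeds_in_eberlein_compact :: "'a topology \<Rightarrow> bool" where
  "embeds_in_eberlein_compact X \<longleftrightarrow>
     (\<exists>(V :: ('a set \<Rightarrow> real) set) N K f.
        banach_space_on V N \<and> K \<subseteq> V \<and> compactin (weak_topology V N) K \<and>
        embedding_map X (subtopology (weak_topology V N) K) f)"

definition embeds_in_uniform_eberlein_compact :: "'a topology \<Rightarrow> bool" where
  "embeds_in_uniform_eberlein_compact X \<longleftrightarrow>
     (\<exists>(V :: ('a set \<Rightarrow> real) set) ip K f.
        hilbert_space_on V ip \<and> K \<subseteq> V \<and>
        compactin (weak_topology V (\<lambda>x. sqrt (ip x x))) K \<and>
        embedding_map X (subtopology (weak_topology V (\<lambda>x. sqrt (ip x x))) K) f)"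

end

theory Submission
  imports Defs
begin

text \<open>Write the base as \<open>B = (\<Union>n. F n)\<close> and pick for every \<open>U \<in> B\<close> a continuous
  \<open>f U : X \<rightarrow> [0,1]\<close> with cozero set \<open>U\<close>. Let \<open>n(U)\<close> be the first level containing \<open>U\<close>.
  The map \<open>x \<mapsto> (2^-n(U) * f U x)\<close>, indexed by \<open>U \<in> B\<close>, embeds \<open>X\<close> into the set \<open>K\<close> of families
  with \<open>0 \<le> y U \<le> 2^-n(U)\<close> whose support has the finite intersection property, and \<open>K\<close> is
  compact in the product topology. If the levels are disjoint, the support of a point of \<open>K\<close>
  meets every level at most once, so \<open>K\<close> is a bounded subset of \<open>l2(B)\<close>; if they are strongly
  point-finite, it meets every level in a finite set, so \<open>K\<close> lies in \<open>c0(B)\<close>. In both spaces the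
  unit vectors form a shrinking basis, so on bounded sets every bounded functional is continuous
  for the product topology: \<open>K\<close> is weakly compact and the embedding stays continuous, and it stays
  open because the sets where a single coordinate is positive are weakly open.\<close>

lemma linear_subspace_zero: "linear_subspace V \<Longrightarrow> (\<lambda>t. 0) \<in> V"
  unfolding linear_subspace_def by blast

lemma linear_subspace_add: "linear_subspace V \<Longrightarrow> x \<in> V \<Longrightarrow> y \<in> V \<Longrightarrow> vadd x y \<in> V"
  unfolding linear_subspace_def by blast

lemma linear_subspace_scale: "linear_subspace V \<Longrightarrow> x \<in> V \<Longrightarrow> vscale c x \<in> V"
  unfolding linear_subspace_def by blast

lemma vdiff_eq_vadd_vscale: "vdiff x y = vadd x (vscale (-1) y)"
  by (simp add: vdiff_def vadd_def vscale_def)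

lemma linear_subspace_diff: "linear_subspace V \<Longrightarrow> x \<in> V \<Longrightarrow> y \<in> V \<Longrightarrow> vdiff x y \<in> V"
  unfolding vdiff_eq_vadd_vscale by (intro linear_subspace_add linear_subspace_scale)

lemma normed_space_on_subspace: "normed_space_on V N \<Longrightarrow> linear_subspace V"
  unfolding normed_space_on_def by blast

lemma normed_space_on_nonneg: "normed_space_on V N \<Longrightarrow> x \<in> V \<Longrightarrow> 0 \<le> N x"
  unfolding normed_space_on_def by blast

lemma normed_space_on_scale: "normed_space_on V N \<Longrightarrow> x \<in> V \<Longrightarrow> N (vscale c x) = \<bar>c\<bar> * N x"
  unfolding normed_space_on_def by blast

lemma normed_space_on_triangle:
  "normed_space_on V N \<Longrightarrow> x \<in> V \<Longrightarrow> y \<in> V \<Longrightarrow> N (vadd x y) \<le> N x + N y"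
  unfolding normed_space_on_def by blast

lemma normed_space_on_diff_le:
  assumes V: "normed_space_on V N" and x: "x \<in> V" and y: "y \<in> V"
  shows "N (vdiff x y) \<le> N x + N y"
proof -
  have "vscale (-1) y \<in> V" using normed_space_on_subspace[OF V] y by (rule linear_subspace_scale)
  then have "N (vdiff x y) \<le> N x + N (vscale (-1) y)"
    unfolding vdiff_eq_vadd_vscale using V x by (intro normed_space_on_triangle)
  then show ?thesis using normed_space_on_scale[OF V y, of "-1"] by simp
qed

lemma bounded_linear_functional_add:
  "bounded_linear_functional_on V N g \<Longrightarrow> x \<in> V \<Longrightarrow> y \<in> V \<Longrightarrow> g (vadd x y) = g x + g y"
  unfolding bounded_linear_functional_on_def by blast

lemma bounded_linear_functional_scale:
  "bounded_linear_functional_on V N g \<Longrightarrow> x \<in> V \<Longrightarrow> g (vscale c x) = c * g x"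
  unfolding bounded_linear_functional_on_def by blast

lemma bounded_linear_functional_bound:
  assumes "bounded_linear_functional_on V N g"
  obtains C where "\<And>x. x \<in> V \<Longrightarrow> \<bar>g x\<bar> \<le> C * N x"
  using assms unfolding bounded_linear_functional_on_def by blast

lemma bounded_linear_functional_zero:
  assumes "linear_subspace V" "bounded_linear_functional_on V N g"
  shows "g (\<lambda>t. 0) = 0"
  using bounded_linear_functional_scale[OF assms(2) linear_subspace_zero[OF assms(1)], of 0]
  by (simp add: vscale_def)

lemma bounded_linear_functional_diff:
  assumes V: "linear_subspace V" and g: "bounded_linear_functional_on V N g" and "x \<in> V" "y \<in> V"
  shows "g (vdiff x y) = g x - g y"
  using assms linear_subspace_scale[OF V \<open>y \<in> V\<close>, of "-1"]
  by (simp add: vdiff_eq_vadd_vscale bounded_linear_functional_add bounded_linear_functional_scale)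

lemma bounded_linear_functional_coordinate:
  assumes "\<And>y. y \<in> V \<Longrightarrow> \<bar>y i\<bar> \<le> N y"
  shows "bounded_linear_functional_on V N (\<lambda>v. v i)"
  unfolding bounded_linear_functional_on_def
  using assms by (auto simp: vadd_def vscale_def intro: exI[of _ 1])

definition truncate :: "'i set \<Rightarrow> ('i \<Rightarrow> real) \<Rightarrow> ('i \<Rightarrow> real)" where
  "truncate S y = (\<lambda>i. if i \<in> S then y i else 0)"

definition coord_vector :: "'i \<Rightarrow> ('i \<Rightarrow> real)" where
  "coord_vector j = (\<lambda>i. if i = j then 1 else 0)"

lemma truncate_empty [simp]: "truncate {} y = (\<lambda>t. 0)"
  by (simp add: truncate_def)

lemma truncate_insert:
  "x \<notin> F \<Longrightarrow> truncate (insert x F) y = vadd (vscale (y x) (coord_vector x)) (truncate F y)"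
  by (auto simp: truncate_def vadd_def vscale_def coord_vector_def fun_eq_iff)

lemma vadd_truncate_vdiff: "vadd (truncate S y) (vdiff y (truncate S y)) = y"
  by (simp add: vadd_def vdiff_def truncate_def)

lemma truncate_in_subspace:
  assumes "linear_subspace V" "\<And>j. coord_vector j \<in> V" "finite S"
  shows "truncate S y \<in> V"
  using \<open>finite S\<close>
  by induction
    (simp_all add: truncate_insert assms linear_subspace_zero linear_subspace_add linear_subspace_scale)

lemma bounded_linear_functional_truncate:
  assumes V: "linear_subspace V" and e: "\<And>j. coord_vector j \<in> V"
    and g: "bounded_linear_functional_on V N g" and "finite S"
  shows "g (truncate S y) = (\<Sum>j\<in>S. y j * g (coord_vector j))"
  using \<open>finite S\<close>
proof induction
  case empty
  show ?case using bounded_linear_functional_zero[OF V g] by simp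
next
  case (insert x F)
  have "truncate F y \<in> V" using V e insert(1) by (rule truncate_in_subspace)
  then show ?case
    using insert linear_subspace_scale[OF V e]
    by (simp add: truncate_insert bounded_linear_functional_add[OF g] bounded_linear_functional_scale[OF g e])
qed

section \<open>Sequence spaces with a shrinking basis\<close>

text \<open>The coordinate vectors form a 1-unconditional shrinking basis.\<close>

definition shrinking_sequence_space :: "('i \<Rightarrow> real) set \<Rightarrow> (('i \<Rightarrow> real) \<Rightarrow> real) \<Rightarrow> bool" where
  "shrinking_sequence_space V N \<longleftrightarrow> normed_space_on V N \<and> (\<forall>j. coord_vector j \<in> V) \<and>
     (\<forall>y\<in>V. \<forall>i. \<bar>y i\<bar> \<le> N y) \<and> (\<forall>y\<in>V. \<forall>E. N (vdiff y (truncate E y)) \<le> N y) \<and>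
     (\<forall>g d. bounded_linear_functional_on V N g \<and> d > 0 \<longrightarrow>
        (\<exists>E. finite E \<and> (\<forall>z\<in>V. (\<forall>i\<in>E. z i = 0) \<longrightarrow> \<bar>g z\<bar> \<le> d * N z)))"

lemma shrinking_sequence_spaceD:
  assumes "shrinking_sequence_space V N"
  shows "normed_space_on V N" "linear_subspace V" "coord_vector j \<in> V"
    and "y \<in> V \<Longrightarrow> \<bar>y i\<bar> \<le> N y" "y \<in> V \<Longrightarrow> N (vdiff y (truncate E y)) \<le> N y"
    and "bounded_linear_functional_on V N g \<Longrightarrow> d > 0 \<Longrightarrow>
           \<exists>E. finite E \<and> (\<forall>z\<in>V. (\<forall>i\<in>E. z i = 0) \<longrightarrow> \<bar>g z\<bar> \<le> d * N z)"
  using assms normed_space_on_subspace unfolding shrinking_sequence_space_def by blast+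

lemma bounded_linear_functional_diff_le:
  assumes S: "shrinking_sequence_space V N" and g: "bounded_linear_functional_on V N g"
    and E: "finite E" "\<forall>z\<in>V. (\<forall>i\<in>E. z i = 0) \<longrightarrow> \<bar>g z\<bar> \<le> d * N z" "0 \<le> d"
    and y: "y \<in> V" "y' \<in> V" "\<And>j. j \<in> E \<Longrightarrow> \<bar>y j - y' j\<bar> \<le> t"
  shows "\<bar>g y - g y'\<bar> \<le> t * (\<Sum>j\<in>E. \<bar>g (coord_vector j)\<bar>) + d * (N y + N y')"
proof -
  note V = shrinking_sequence_spaceD(1,2,3)[OF S]
  let ?w = "vdiff y y'"
  let ?r = "vdiff ?w (truncate E ?w)"
  have wV: "?w \<in> V" using V(2) y(1,2) by (rule linear_subspace_diff)
  have tV: "truncate E ?w \<in> V" using V(2,3) E(1) by (rule truncate_in_subspace)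
  have rV: "?r \<in> V" using V(2) wV tV by (rule linear_subspace_diff)
  have "g y - g y' = g (truncate E ?w) + g ?r"
    using bounded_linear_functional_diff[OF V(2) g y(1,2)] bounded_linear_functional_add[OF g tV rV]
    by (simp only: vadd_truncate_vdiff)
  moreover have "\<bar>g (truncate E ?w)\<bar> \<le> t * (\<Sum>j\<in>E. \<bar>g (coord_vector j)\<bar>)"
  proof -
    have "\<bar>g (truncate E ?w)\<bar> \<le> (\<Sum>j\<in>E. \<bar>?w j\<bar> * \<bar>g (coord_vector j)\<bar>)"
      unfolding bounded_linear_functional_truncate[OF V(2,3) g E(1)] abs_mult[symmetric] by (rule sum_abs)
    also have "\<dots> \<le> t * (\<Sum>j\<in>E. \<bar>g (coord_vector j)\<bar>)"
      unfolding sum_distrib_left by (rule sum_mono) (simp add: vdiff_def y(3) mult_right_mono)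
    finally show ?thesis .
  qed
  moreover have "\<bar>g ?r\<bar> \<le> d * (N y + N y')"
  proof -
    have "\<bar>g ?r\<bar> \<le> d * N ?r" using E(2) rV by (simp add: vdiff_def truncate_def)
    also have "\<dots> \<le> d * N ?w" using shrinking_sequence_spaceD(5)[OF S wV] E(3) by (rule mult_left_mono)
    also have "\<dots> \<le> d * (N y + N y')"
      using normed_space_on_diff_le[OF V(1) y(1,2)] E(3) by (rule mult_left_mono)
    finally show ?thesis .
  qed
  ultimately show ?thesis by linarith
qed

text \<open>On norm-bounded sets, closeness in finitely many coordinates controls every bounded functional.\<close>

lemma continuous_map_bounded_linear_functional_product:
  assumes S: "shrinking_sequence_space V N" and g: "bounded_linear_functional_on V N g"
    and K: "K \<subseteq> V" "\<And>y. y \<in> K \<Longrightarrow> N y \<le> R"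
  shows "continuous_map (subtopology (product_topology (\<lambda>_. euclideanreal) UNIV) K) euclideanreal g"
proof (rule Met_TC.continuous_map_to_metric[THEN iffD2, unfolded mtopology_is_euclidean mball_eq_ball],
    intro ballI allI impI)
  let ?P = "product_topology (\<lambda>_::'a. euclideanreal) UNIV"
  note V = shrinking_sequence_spaceD(1,2)[OF S]
  fix y0 and e :: real
  assume "y0 \<in> topspace (subtopology ?P K)" and e: "e > 0"
  then have y0: "y0 \<in> K" by simp
  have R: "R \<ge> 0" using normed_space_on_nonneg[OF V(1)] K y0 by (meson order_trans subsetD)
  define d where "d = e / (2 * (2 * R + 1))"
  have d: "d > 0" using e R by (simp add: d_def)
  obtain E where E: "finite E" "\<forall>z\<in>V. (\<forall>i\<in>E. z i = 0) \<longrightarrow> \<bar>g z\<bar> \<le> d * N z"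
    using shrinking_sequence_spaceD(6)[OF S g d] by blast
  define C where "C = (\<Sum>j\<in>E. \<bar>g (coord_vector j)\<bar>)"
  have C: "C \<ge> 0" by (simp add: C_def sum_nonneg)
  define t where "t = e / (2 * (C + 1))"
  have t: "t > 0" using e C by (simp add: t_def)
  define W where "W = K \<inter> (\<Pi>\<^sub>E j\<in>UNIV. if j \<in> E then ball (y0 j) t else UNIV)"
  have "openin ?P (\<Pi>\<^sub>E j\<in>UNIV. if j \<in> E then ball (y0 j) t else UNIV)"
    by (subst openin_PiE_gen) (auto intro: finite_subset[OF _ E(1)])
  then have "openin (subtopology ?P K) W"
    unfolding W_def by (simp add: openin_subtopology_Int2 inf_commute)
  moreover have "y0 \<in> W" using y0 t by (simp add: W_def PiE_iff)
  moreover have "g y \<in> ball (g y0) e" if y: "y \<in> W" for y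
  proof -
    have yK: "y \<in> K" using y by (simp add: W_def)
    have close: "\<bar>y j - y0 j\<bar> \<le> t" if "j \<in> E" for j
    proof -
      have "y j \<in> (if j \<in> E then ball (y0 j) t else UNIV)" using y by (simp add: W_def PiE_iff)
      then show ?thesis using that by (simp add: dist_real_def abs_minus_commute)
    qed
    have "\<bar>g y - g y0\<bar> \<le> t * C + d * (N y + N y0)"
      unfolding C_def using d yK y0 K(1) close
      by (intro bounded_linear_functional_diff_le[OF S g E]) auto
    also have "\<dots> \<le> t * C + d * (2 * R)" using K(2)[OF yK] K(2)[OF y0] d by simp
    also have "\<dots> < e / 2 + e / 2"
      using e C R by (intro add_strict_mono) (simp_all add: t_def d_def field_simps)
    finally show ?thesis by (simp add: dist_real_def abs_minus_commute)
  qed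
  ultimately show "\<exists>W. openin (subtopology ?P K) W \<and> y0 \<in> W \<and> (\<forall>y\<in>W. g y \<in> ball (g y0) e)"
    by blast
qed

lemma topspace_weak_topology [simp]: "topspace (weak_topology V N) = V"
proof -
  have "bounded_linear_functional_on V N (\<lambda>_. 0)"
    unfolding bounded_linear_functional_on_def by (auto intro: exI[of _ 0])
  then have "V \<in> {{x \<in> V. f x \<in> U} | f U. bounded_linear_functional_on V N f \<and> open U}"
    by force
  then show ?thesis unfolding weak_topology_def topology_generated_by_topspace by blast
qed

lemma openin_weak_topology_functional:
  assumes "bounded_linear_functional_on V N g" "open U"
  shows "openin (weak_topology V N) {x \<in> V. g x \<in> U}"
  unfolding weak_topology_def by (rule topology_generated_by_Basis) (use assms in blast)

lemma continuous_map_id_weak_topology: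
  assumes S: "shrinking_sequence_space V N" and K: "K \<subseteq> V" "\<And>y. y \<in> K \<Longrightarrow> N y \<le> R"
  shows "continuous_map (subtopology (product_topology (\<lambda>_. euclideanreal) UNIV) K) (weak_topology V N) id"
  unfolding weak_topology_def
proof (rule continuous_on_generated_topo)
  let ?PK = "subtopology (product_topology (\<lambda>_::'a. euclideanreal) UNIV) K"
  fix U assume "U \<in> {{x \<in> V. f x \<in> U} | f U. bounded_linear_functional_on V N f \<and> open U}"
  then obtain g Q where U: "U = {x \<in> V. g x \<in> Q}" and g: "bounded_linear_functional_on V N g"
    and "open Q"
    by blast
  have "openin ?PK {x \<in> topspace ?PK. g x \<in> Q}"
    using continuous_map_bounded_linear_functional_product[OF S g K] \<open>open Q\<close>
    unfolding continuous_map_def by simp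
  moreover have "{x \<in> topspace ?PK. g x \<in> Q} = id -` U \<inter> topspace ?PK" using K by (auto simp: U)
  ultimately show "openin ?PK (id -` U \<inter> topspace ?PK)" by simp
next
  show "id ` topspace (subtopology (product_topology (\<lambda>_. euclideanreal) UNIV) K)
      \<subseteq> \<Union> {{x \<in> V. f x \<in> U} | f U. bounded_linear_functional_on V N f \<and> open U}"
    using K(1) topspace_weak_topology[of V N]
    unfolding weak_topology_def topology_generated_by_topspace by auto
qed

lemma compactin_weak_topology:
  assumes "shrinking_sequence_space V N" "K \<subseteq> V" "\<And>y. y \<in> K \<Longrightarrow> N y \<le> R"
    and "compactin (product_topology (\<lambda>_. euclideanreal) UNIV) K"
  shows "compactin (weak_topology V N) K"
  using image_compactin[OF _ continuous_map_id_weak_topology[OF assms(1-3)]] assms(4)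
  by (simp add: compactin_subtopology)

lemma open_map_by_positive_coordinates:
  fixes \<phi> :: "'a \<Rightarrow> 'i \<Rightarrow> real"
  assumes "\<phi> ` topspace X \<subseteq> topspace W"
    and coord: "\<And>i. openin W {v \<in> topspace W. 0 < v i}"
    and sep: "\<And>U x. openin X U \<Longrightarrow> x \<in> U \<Longrightarrow> \<exists>i. 0 < \<phi> x i \<and> (\<forall>y\<in>topspace X. 0 < \<phi> y i \<longrightarrow> y \<in> U)"
  shows "open_map X (subtopology W (\<phi> ` topspace X)) \<phi>"
  unfolding open_map_def
proof (intro allI impI)
  fix U assume U: "openin X U"
  define T where "T = \<Union>{{v \<in> topspace W. 0 < v i} | i. \<forall>y\<in>topspace X. 0 < \<phi> y i \<longrightarrow> y \<in> U}"
  have "openin W T" unfolding T_def using coord by blast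
  moreover have "\<phi> ` U = T \<inter> \<phi> ` topspace X"
  proof
    show "\<phi> ` U \<subseteq> T \<inter> \<phi> ` topspace X"
    proof
      fix w assume "w \<in> \<phi> ` U"
      then obtain x where x: "x \<in> U" "w = \<phi> x" by blast
      then have "x \<in> topspace X" using openin_subset[OF U] by blast
      moreover obtain i where "0 < \<phi> x i" "\<forall>y\<in>topspace X. 0 < \<phi> y i \<longrightarrow> y \<in> U"
        using sep[OF U x(1)] by blast
      ultimately show "w \<in> T \<inter> \<phi> ` topspace X" using x assms(1) unfolding T_def by blast
    qed
    show "T \<inter> \<phi> ` topspace X \<subseteq> \<phi> ` U" unfolding T_def by blast
  qed
  ultimately show "openin (subtopology W (\<phi> ` topspace X)) (\<phi> ` U)" by (auto simp: openin_subtopology)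
qed

lemma embedding_map_by_positive_coordinates:
  fixes \<phi> :: "'a \<Rightarrow> 'i \<Rightarrow> real"
  assumes cont: "continuous_map X W \<phi>" and K: "\<phi> ` topspace X \<subseteq> K" "K \<subseteq> topspace W"
    and coord: "\<And>i. openin W {v \<in> topspace W. 0 < v i}"
    and sep: "\<And>U x. openin X U \<Longrightarrow> x \<in> U \<Longrightarrow> \<exists>i. 0 < \<phi> x i \<and> (\<forall>y\<in>topspace X. 0 < \<phi> y i \<longrightarrow> y \<in> U)"
    and inj: "inj_on \<phi> (topspace X)"
  shows "embedding_map X (subtopology W K) \<phi>"
proof -
  have "homeomorphic_map X (subtopology W (\<phi> ` topspace X)) \<phi>"
  proof (rule bijective_open_imp_homeomorphic_map)
    show "continuous_map X (subtopology W (\<phi> ` topspace X)) \<phi>"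
      using cont by (simp add: continuous_map_in_subtopology)
    show "open_map X (subtopology W (\<phi> ` topspace X)) \<phi>"
      using K coord sep by (intro open_map_by_positive_coordinates) auto
  qed (use K inj in auto)
  moreover have "subtopology (subtopology W K) (\<phi> ` topspace X) = subtopology W (\<phi> ` topspace X)"
    using K(1) by (simp add: subtopology_subtopology Int_absorb1)
  ultimately show ?thesis unfolding embedding_map_def by simp
qed

lemma coordinatewise_limit_of_Cauchy:
  assumes V: "normed_space_on V N" and coord: "\<And>y i. y \<in> V \<Longrightarrow> \<bar>y i\<bar> \<le> N y"
    and s: "\<And>n. s n \<in> V" and cau: "\<And>e. e > 0 \<Longrightarrow> \<exists>M. \<forall>m\<ge>M. \<forall>n\<ge>M. N (vdiff (s m) (s n)) < e"
  shows "(\<lambda>n. s n i) \<longlonglongrightarrow> lim (\<lambda>n. s n i)"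
proof -
  have le: "\<bar>s m i - s n i\<bar> \<le> N (vdiff (s m) (s n))" for m n
    using coord[OF linear_subspace_diff[OF normed_space_on_subspace[OF V] s s], where i=i]
    by (simp add: vdiff_def)
  have "Cauchy (\<lambda>n. s n i)"
    unfolding Cauchy_iff real_norm_def
  proof (intro allI impI)
    fix e :: real assume "e > 0"
    then obtain M where "\<forall>m\<ge>M. \<forall>n\<ge>M. N (vdiff (s m) (s n)) < e" using cau by blast
    then show "\<exists>M. \<forall>m\<ge>M. \<forall>n\<ge>M. \<bar>s m i - s n i\<bar> < e" using le by (meson order_le_less_trans)
  qed
  then show ?thesis by (simp add: Cauchy_convergent_iff convergent_LIMSEQ_iff)
qed

lemma banach_space_onI:
  assumes V: "normed_space_on V N"
    and limit: "\<And>s :: nat \<Rightarrow> _. \<forall>n. s n \<in> V \<Longrightarrow> \<forall>e>0. \<exists>M. \<forall>m\<ge>M. \<forall>n\<ge>M. N (vdiff (s m) (s n)) < e \<Longrightarrow>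
       \<exists>x. \<forall>e>0. \<exists>M. \<forall>m\<ge>M. vdiff (s m) x \<in> V \<and> N (vdiff (s m) x) \<le> e"
  shows "banach_space_on V N"
  unfolding banach_space_on_def
proof (intro conjI allI impI)
  show "normed_space_on V N" by (rule V)
  fix s :: "nat \<Rightarrow> _" assume "(\<forall>n. s n \<in> V) \<and> (\<forall>e>0. \<exists>M. \<forall>m\<ge>M. \<forall>n\<ge>M. N (vdiff (s m) (s n)) < e)"
  then have s: "\<forall>n. s n \<in> V" and cau: "\<forall>e>0. \<exists>M. \<forall>m\<ge>M. \<forall>n\<ge>M. N (vdiff (s m) (s n)) < e"
    by blast+
  obtain x where x: "\<And>e. e > 0 \<Longrightarrow> \<exists>M. \<forall>m\<ge>M. vdiff (s m) x \<in> V \<and> N (vdiff (s m) x) \<le> e"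
    using limit[OF s cau] by blast
  obtain M where "vdiff (s M) x \<in> V" using x[of 1] by auto
  then have "vdiff (s M) (vdiff (s M) x) \<in> V"
    using normed_space_on_subspace[OF V] s by (blast intro: linear_subspace_diff)
  moreover have "vdiff (s M) (vdiff (s M) x) = x" by (simp add: vdiff_def)
  ultimately have xV: "x \<in> V" by simp
  have "(\<lambda>n. N (vdiff (s n) x)) \<longlonglongrightarrow> 0"
    unfolding LIMSEQ_iff real_norm_def
  proof (intro allI impI)
    fix r :: real assume "r > 0"
    then obtain M where M: "\<forall>m\<ge>M. vdiff (s m) x \<in> V \<and> N (vdiff (s m) x) \<le> r / 2"
      using x[of "r / 2"] by auto
    then have "\<bar>N (vdiff (s n) x) - 0\<bar> < r" if "n \<ge> M" for n
      using that \<open>r > 0\<close> normed_space_on_nonneg[OF V] by fastforce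
    then show "\<exists>M. \<forall>n\<ge>M. \<bar>N (vdiff (s n) x) - 0\<bar> < r" by blast
  qed
  then show "\<exists>x\<in>V. (\<lambda>n. N (vdiff (s n) x)) \<longlonglongrightarrow> 0" using xV by blast
qed

lemma small_tail_sums:
  fixes f :: "'i \<Rightarrow> real"
  assumes f: "\<And>j. 0 \<le> f j" and M: "\<And>S. finite S \<Longrightarrow> sum f S \<le> M" and d: "d > 0"
  obtains E where "finite E" "\<And>S. finite S \<Longrightarrow> S \<inter> E = {} \<Longrightarrow> sum f S \<le> d"
proof -
  have fs: "f summable_on UNIV"
    by (rule nonneg_bdd_above_summable_on) (use f M in \<open>auto intro!: bdd_aboveI2\<close>)
  obtain E where E: "finite E" "dist (sum f E) (infsum f UNIV) \<le> d"
    using infsum_finite_approximation[OF fs d] by auto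
  show ?thesis
  proof (rule that[OF E(1)])
    fix S assume S: "finite S" "S \<inter> E = {}"
    have "sum f (S \<union> E) \<le> infsum f UNIV"
      by (rule finite_sum_le_infsum[OF fs]) (use S E f in auto)
    moreover have "sum f (S \<union> E) = sum f S + sum f E" using S E by (simp add: sum.union_disjoint)
    ultimately show "sum f S \<le> d" using E(2) by (simp add: dist_real_def)
  qed
qed

lemma bounded_linear_functional_le_by_dense_truncations:
  assumes V: "normed_space_on V N" and e: "\<And>j. coord_vector j \<in> V"
    and dense: "\<And>\<eta>. \<eta> > 0 \<Longrightarrow> \<exists>F. finite F \<and> N (vdiff z (truncate F z)) \<le> \<eta>"
    and g: "bounded_linear_functional_on V N g"
    and E: "\<And>S. finite S \<Longrightarrow> S \<inter> E = {} \<Longrightarrow> \<bar>\<Sum>j\<in>S. z j * g (coord_vector j)\<bar> \<le> d * N z"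
    and z: "z \<in> V" "\<forall>i\<in>E. z i = 0"
  shows "\<bar>g z\<bar> \<le> d * N z"
proof (rule field_le_epsilon)
  have L: "linear_subspace V" using V by (rule normed_space_on_subspace)
  obtain C where C: "\<And>x. x \<in> V \<Longrightarrow> \<bar>g x\<bar> \<le> C * N x" using bounded_linear_functional_bound[OF g] by blast
  fix \<eta> :: real assume "\<eta> > 0"
  then obtain F where F: "finite F" "N (vdiff z (truncate F z)) \<le> \<eta> / (\<bar>C\<bar> + 1)"
    using dense[of "\<eta> / (\<bar>C\<bar> + 1)"] by auto
  let ?r = "vdiff z (truncate F z)"
  have tV: "truncate F z \<in> V" using L e F(1) by (rule truncate_in_subspace)
  have rV: "?r \<in> V" using L z(1) tV by (rule linear_subspace_diff)
  have "g z = g (truncate F z) + g ?r"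
    using bounded_linear_functional_add[OF g tV rV] by (simp only: vadd_truncate_vdiff)
  moreover have "\<bar>g (truncate F z)\<bar> \<le> d * N z"
  proof -
    have "(\<Sum>j\<in>F. z j * g (coord_vector j)) = (\<Sum>j\<in>F - E. z j * g (coord_vector j))"
      by (rule sum.mono_neutral_right) (use F z in auto)
    moreover have "\<bar>\<Sum>j\<in>F - E. z j * g (coord_vector j)\<bar> \<le> d * N z" using F(1) by (intro E) auto
    ultimately show ?thesis by (simp add: bounded_linear_functional_truncate[OF L e g F(1)])
  qed
  moreover have "\<bar>g ?r\<bar> \<le> \<eta>"
  proof -
    have "\<bar>g ?r\<bar> \<le> \<bar>C\<bar> * N ?r"
      using C[OF rV] normed_space_on_nonneg[OF V rV] by (meson abs_ge_self mult_right_mono order_trans)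
    also have "\<dots> \<le> \<bar>C\<bar> * (\<eta> / (\<bar>C\<bar> + 1))" using F(2) by (rule mult_left_mono) simp
    also have "\<dots> \<le> \<eta>" using \<open>\<eta> > 0\<close> by (simp add: field_simps)
    finally show ?thesis .
  qed
  ultimately show "\<bar>g z\<bar> \<le> d * N z + \<eta>" by linarith
qed

lemma shrinking_sequence_spaceI:
  assumes V: "normed_space_on V N" and e: "\<And>j. coord_vector j \<in> V"
    and coord: "\<And>y i. y \<in> V \<Longrightarrow> \<bar>y i\<bar> \<le> N y"
    and cut: "\<And>y E. y \<in> V \<Longrightarrow> N (vdiff y (truncate E y)) \<le> N y"
    and dense: "\<And>z \<eta>. z \<in> V \<Longrightarrow> \<eta> > 0 \<Longrightarrow> \<exists>F. finite F \<and> N (vdiff z (truncate F z)) \<le> \<eta>"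
    and finite_part: "\<And>g d. bounded_linear_functional_on V N g \<Longrightarrow> d > 0 \<Longrightarrow> \<exists>E. finite E \<and>
         (\<forall>z\<in>V. \<forall>S. finite S \<and> S \<inter> E = {} \<longrightarrow> \<bar>\<Sum>j\<in>S. z j * g (coord_vector j)\<bar> \<le> d * N z)"
  shows "shrinking_sequence_space V N"
proof -
  have "\<exists>E. finite E \<and> (\<forall>z\<in>V. (\<forall>i\<in>E. z i = 0) \<longrightarrow> \<bar>g z\<bar> \<le> d * N z)"
    if "bounded_linear_functional_on V N g \<and> d > 0" for g d
  proof -
    have g: "bounded_linear_functional_on V N g" and "d > 0" using that by blast+
    obtain E where E: "finite E"
      "\<forall>z\<in>V. \<forall>S. finite S \<and> S \<inter> E = {} \<longrightarrow> \<bar>\<Sum>j\<in>S. z j * g (coord_vector j)\<bar> \<le> d * N z"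
      using finite_part[OF g \<open>d > 0\<close>] by (elim exE conjE) (rule that)
    have "\<bar>g z\<bar> \<le> d * N z" if "z \<in> V" "\<forall>i\<in>E. z i = 0" for z
      using E(2) that
      by (intro bounded_linear_functional_le_by_dense_truncations[OF V e dense g]) auto
    then show ?thesis using E(1) by blast
  qed
  then show ?thesis
    unfolding shrinking_sequence_space_def
    by (intro conjI allI ballI impI V e coord cut) simp_all
qed

section \<open>The Hilbert space \<open>l2\<close>\<close>

definition l2 :: "('i \<Rightarrow> real) set" where
  "l2 = {y. (\<lambda>i. (y i)\<^sup>2) summable_on UNIV}"

definition l2_inner :: "('i \<Rightarrow> real) \<Rightarrow> ('i \<Rightarrow> real) \<Rightarrow> real" where
  "l2_inner x y = infsum (\<lambda>i. x i * y i) UNIV"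

definition l2_norm :: "('i \<Rightarrow> real) \<Rightarrow> real" where
  "l2_norm x = sqrt (l2_inner x x)"

lemma l2_square_summable: "y \<in> l2 \<Longrightarrow> (\<lambda>i. y i * y i) summable_on UNIV"
  unfolding l2_def by (simp add: power2_eq_square)

lemma l2_mult_summable:
  assumes "x \<in> l2" "y \<in> l2"
  shows "(\<lambda>i. x i * y i) summable_on UNIV"
proof -
  have "(\<lambda>i. (x i)\<^sup>2 + (y i)\<^sup>2) summable_on UNIV"
    using assms unfolding l2_def by (simp add: summable_on_add)
  then have "(\<lambda>i. (1 / 2) * ((x i)\<^sup>2 + (y i)\<^sup>2)) summable_on UNIV"
    by (rule summable_on_cmult_right)
  then have "(\<lambda>i. ((x i)\<^sup>2 + (y i)\<^sup>2) / 2) summable_on UNIV" by simp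
  then have "(\<lambda>i. \<bar>x i * y i\<bar>) summable_on UNIV"
  proof (rule summable_on_comparison_test)
    fix i
    have "0 \<le> (\<bar>x i\<bar> - \<bar>y i\<bar>)\<^sup>2" by simp
    then show "\<bar>x i * y i\<bar> \<le> ((x i)\<^sup>2 + (y i)\<^sup>2) / 2"
      by (simp add: power2_eq_square abs_mult algebra_simps)
  qed simp
  then show ?thesis by (subst summable_on_iff_abs_summable_on_real) simp
qed

lemma l2_zero: "(\<lambda>t. 0) \<in> l2"
  by (simp add: l2_def)

lemma l2_scale: "x \<in> l2 \<Longrightarrow> vscale c x \<in> l2"
  unfolding l2_def vscale_def by (simp add: power_mult_distrib summable_on_cmult_right)

lemma l2_add:
  assumes "x \<in> l2" "y \<in> l2"
  shows "vadd x y \<in> l2"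
proof -
  have "(\<lambda>i. 2 * (x i)\<^sup>2 + 2 * (y i)\<^sup>2) summable_on UNIV"
    using assms unfolding l2_def by (simp add: summable_on_add summable_on_cmult_right)
  then have "(\<lambda>i. (x i + y i)\<^sup>2) summable_on UNIV"
  proof (rule summable_on_comparison_test)
    fix i
    have "0 \<le> (x i - y i)\<^sup>2" by simp
    then show "(x i + y i)\<^sup>2 \<le> 2 * (x i)\<^sup>2 + 2 * (y i)\<^sup>2"
      by (simp add: power2_eq_square algebra_simps)
  qed simp
  then show ?thesis by (simp add: l2_def vadd_def)
qed

lemma linear_subspace_l2: "linear_subspace l2"
  unfolding linear_subspace_def using l2_zero l2_add l2_scale by blast

lemma l2_inner_commute: "l2_inner x y = l2_inner y x"
  by (simp add: l2_inner_def mult.commute)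

lemma l2_inner_add_left: "x \<in> l2 \<Longrightarrow> y \<in> l2 \<Longrightarrow> z \<in> l2 \<Longrightarrow> l2_inner (vadd x y) z = l2_inner x z + l2_inner y z"
  unfolding l2_inner_def vadd_def by (simp add: distrib_right infsum_add l2_mult_summable)

lemma l2_inner_scale_left: "x \<in> l2 \<Longrightarrow> y \<in> l2 \<Longrightarrow> l2_inner (vscale c x) y = c * l2_inner x y"
  unfolding l2_inner_def vscale_def by (simp add: mult.assoc infsum_cmult_right l2_mult_summable)

lemma l2_inner_self_nonneg: "0 \<le> l2_inner x x"
  unfolding l2_inner_def by (rule infsum_nonneg) simp

lemma l2_inner_self_eq_0:
  assumes "x \<in> l2" "l2_inner x x = 0"
  shows "x = (\<lambda>t. 0)"
proof
  fix i
  have "x i * x i = 0"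
    by (rule nonneg_infsum_le_0D[of "\<lambda>i. x i * x i" UNIV])
      (use assms in \<open>auto simp: l2_inner_def l2_square_summable\<close>)
  then show "x i = 0" by simp
qed

lemma l2_inner_Cauchy_Schwarz:
  assumes x: "x \<in> l2" and y: "y \<in> l2"
  shows "(l2_inner x y)\<^sup>2 \<le> l2_inner x x * l2_inner y y"
proof (cases "l2_inner y y = 0")
  case True
  then show ?thesis using l2_inner_self_eq_0[OF y] by (simp add: l2_inner_def)
next
  case False
  then have p: "l2_inner y y > 0" using l2_inner_self_nonneg[of y] by linarith
  define t where "t = l2_inner x y / l2_inner y y"
  have sy: "vscale (- t) y \<in> l2" using y by (rule l2_scale)
  have w: "vadd x (vscale (- t) y) \<in> l2" using x sy by (rule l2_add)
  have "0 \<le> l2_inner (vadd x (vscale (- t) y)) (vadd x (vscale (- t) y))"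
    by (rule l2_inner_self_nonneg)
  also have "\<dots> = l2_inner x x - 2 * t * l2_inner x y + t\<^sup>2 * l2_inner y y"
  proof -
    have "l2_inner (vadd x (vscale (- t) y)) (vadd x (vscale (- t) y))
        = l2_inner (vadd x (vscale (- t) y)) x + (- t) * l2_inner (vadd x (vscale (- t) y)) y"
      using l2_inner_add_left[OF x sy w] l2_inner_scale_left[OF y w] by (simp add: l2_inner_commute)
    also have "\<dots> = (l2_inner x x + (- t) * l2_inner y x) + (- t) * (l2_inner x y + (- t) * l2_inner y y)"
      using l2_inner_add_left[OF x sy x] l2_inner_add_left[OF x sy y]
        l2_inner_scale_left[OF y x] l2_inner_scale_left[OF y y] by simp
    finally show ?thesis by (simp add: l2_inner_commute[of y x] power2_eq_square algebra_simps)
  qed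
  also have "\<dots> = l2_inner x x - (l2_inner x y)\<^sup>2 / l2_inner y y"
    using p by (simp add: t_def power2_eq_square field_simps)
  finally show ?thesis using p by (simp add: field_simps)
qed

lemma l2_norm_nonneg: "0 \<le> l2_norm x"
  by (simp add: l2_norm_def l2_inner_self_nonneg)

lemma l2_norm_square: "(l2_norm x)\<^sup>2 = l2_inner x x"
  by (simp add: l2_norm_def l2_inner_self_nonneg)

lemma l2_inner_le_norm_mult:
  assumes "x \<in> l2" "y \<in> l2"
  shows "l2_inner x y \<le> l2_norm x * l2_norm y"
proof -
  have "(l2_inner x y)\<^sup>2 \<le> (l2_norm x * l2_norm y)\<^sup>2"
    using l2_inner_Cauchy_Schwarz[OF assms] by (simp only: power_mult_distrib l2_norm_square)
  then have "\<bar>l2_inner x y\<bar> \<le> \<bar>l2_norm x * l2_norm y\<bar>" by (simp only: abs_le_square_iff)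
  then show ?thesis using l2_norm_nonneg[of x] l2_norm_nonneg[of y] by (simp add: abs_le_iff)
qed

lemma l2_norm_triangle:
  assumes x: "x \<in> l2" and y: "y \<in> l2"
  shows "l2_norm (vadd x y) \<le> l2_norm x + l2_norm y"
proof -
  have "l2_inner (vadd x y) (vadd x y) = l2_inner x (vadd x y) + l2_inner y (vadd x y)"
    using x y l2_add[OF x y] by (rule l2_inner_add_left)
  also have "l2_inner x (vadd x y) = l2_inner x x + l2_inner y x"
    using l2_inner_add_left[OF x y x] by (simp only: l2_inner_commute[of x "vadd x y"])
  also have "l2_inner y (vadd x y) = l2_inner x y + l2_inner y y"
    using l2_inner_add_left[OF x y y] by (simp only: l2_inner_commute[of y "vadd x y"])
  finally have "(l2_norm (vadd x y))\<^sup>2 = (l2_norm x)\<^sup>2 + 2 * l2_inner x y + (l2_norm y)\<^sup>2"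
    by (simp add: l2_norm_square l2_inner_commute[of y x])
  also have "\<dots> \<le> (l2_norm x + l2_norm y)\<^sup>2"
    using l2_inner_le_norm_mult[OF x y] by (simp add: power2_sum)
  finally show ?thesis by (rule power2_le_imp_le) (simp add: l2_norm_nonneg)
qed

lemma l2_norm_scale:
  assumes x: "x \<in> l2"
  shows "l2_norm (vscale c x) = \<bar>c\<bar> * l2_norm x"
proof -
  have "l2_inner (vscale c x) (vscale c x) = c * l2_inner x (vscale c x)"
    using x l2_scale[OF x] by (rule l2_inner_scale_left)
  also have "l2_inner x (vscale c x) = c * l2_inner x x"
    using l2_inner_scale_left[OF x x, of c] by (simp add: l2_inner_commute)
  finally have "l2_inner (vscale c x) (vscale c x) = c\<^sup>2 * l2_inner x x"
    by (simp add: power2_eq_square)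
  then show ?thesis by (simp add: l2_norm_def real_sqrt_mult)
qed

lemma normed_space_on_l2: "normed_space_on l2 l2_norm"
  unfolding normed_space_on_def
  using linear_subspace_l2 l2_norm_nonneg l2_norm_scale l2_norm_triangle
    l2_inner_self_eq_0 l2_inner_self_nonneg
  by (auto simp: l2_norm_def)

lemma l2_finite_sum_le_norm:
  assumes "y \<in> l2" "finite S"
  shows "sqrt (\<Sum>i\<in>S. (y i)\<^sup>2) \<le> l2_norm y"
  unfolding l2_norm_def l2_inner_def power2_eq_square
  by (intro real_sqrt_le_mono finite_sum_le_infsum l2_square_summable assms) simp_all

lemma l2_coordinate_le_norm: "y \<in> l2 \<Longrightarrow> \<bar>y i\<bar> \<le> l2_norm y"
  using l2_finite_sum_le_norm[of y "{i}"] by simp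

lemma l2_norm_le_of_finite_sums:
  assumes sums: "\<And>F. finite F \<Longrightarrow> (\<Sum>i\<in>F. (y i)\<^sup>2) \<le> r\<^sup>2" and "0 \<le> r"
  shows "y \<in> l2" "l2_norm y \<le> r"
proof -
  have ys: "(\<lambda>i. y i * y i) summable_on UNIV"
    by (rule nonneg_bdd_above_summable_on) (use sums in \<open>auto intro!: bdd_aboveI2 simp: power2_eq_square zero_le_square\<close>)
  then show "y \<in> l2" by (simp add: l2_def power2_eq_square)
  have "l2_inner y y \<le> r\<^sup>2"
    unfolding l2_inner_def by (rule infsum_le_finite_sums[OF ys]) (use sums in \<open>auto simp: power2_eq_square\<close>)
  then show "l2_norm y \<le> r"
    unfolding l2_norm_def by (rule real_le_lsqrt[OF \<open>0 \<le> r\<close>])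
qed

lemma l2_finite_support:
  assumes S: "finite S" and z: "\<And>i. i \<notin> S \<Longrightarrow> z i = 0"
  shows "z \<in> l2" "l2_inner z z = (\<Sum>i\<in>S. (z i)\<^sup>2)"
proof -
  have "(\<lambda>i. (z i)\<^sup>2) summable_on UNIV \<longleftrightarrow> (\<lambda>i. (z i)\<^sup>2) summable_on S"
    by (rule summable_on_cong_neutral) (use z in auto)
  then show "z \<in> l2" using S by (simp add: l2_def)
  have "infsum (\<lambda>i. (z i)\<^sup>2) UNIV = infsum (\<lambda>i. (z i)\<^sup>2) S"
    by (rule infsum_cong_neutral) (use z in auto)
  then show "l2_inner z z = (\<Sum>i\<in>S. (z i)\<^sup>2)" using S by (simp add: l2_inner_def power2_eq_square)
qed

lemma coord_vector_in_l2: "coord_vector j \<in> l2"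
  by (rule l2_finite_support(1)[of "{j}"]) (auto simp: coord_vector_def)

lemma l2_norm_mono:
  assumes y: "y \<in> l2" and le: "\<And>i. \<bar>z i\<bar> \<le> \<bar>y i\<bar>"
  shows "z \<in> l2" "l2_norm z \<le> l2_norm y"
proof -
  have "(\<Sum>i\<in>F. (z i)\<^sup>2) \<le> (l2_norm y)\<^sup>2" if "finite F" for F
  proof -
    have "(\<Sum>i\<in>F. (z i)\<^sup>2) \<le> (\<Sum>i\<in>F. (y i)\<^sup>2)"
      using le by (intro sum_mono) (simp add: abs_le_square_iff)
    also have "\<dots> \<le> (l2_norm y)\<^sup>2"
      using l2_finite_sum_le_norm[OF y that] by (rule sqrt_le_D)
    finally show ?thesis .
  qed
  then show "z \<in> l2" "l2_norm z \<le> l2_norm y"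
    using l2_norm_le_of_finite_sums l2_norm_nonneg by blast+
qed

lemma l2_norm_truncate_diff_le: "y \<in> l2 \<Longrightarrow> l2_norm (vdiff y (truncate E y)) \<le> l2_norm y"
  by (rule l2_norm_mono(2)) (auto simp: vdiff_def truncate_def)

lemma l2_truncate_approx:
  assumes y: "y \<in> l2" and e: "e > 0"
  shows "\<exists>F. finite F \<and> l2_norm (vdiff y (truncate F y)) \<le> e"
proof -
  obtain F where F: "finite F" "dist (\<Sum>i\<in>F. y i * y i) (infsum (\<lambda>i. y i * y i) UNIV) \<le> e\<^sup>2"
    using infsum_finite_approximation[OF l2_square_summable[OF y], of "e\<^sup>2"] e by auto
  let ?d = "vdiff y (truncate F y)" and ?r = "truncate F y"
  have d: "?d \<in> l2" using l2_norm_mono(1)[OF y, of ?d] by (auto simp: vdiff_def truncate_def)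
  have r: "?r \<in> l2" "l2_inner ?r ?r = (\<Sum>i\<in>F. y i * y i)"
    using l2_finite_support[OF F(1), of ?r] by (auto simp: truncate_def power2_eq_square)
  have "(\<lambda>i. y i * y i) = (\<lambda>i. ?d i * ?d i + ?r i * ?r i)"
    by (auto simp: vdiff_def truncate_def fun_eq_iff)
  then have "infsum (\<lambda>i. y i * y i) UNIV = l2_inner ?d ?d + l2_inner ?r ?r"
    using infsum_add[OF l2_square_summable[OF d] l2_square_summable[OF r(1)]] by (simp add: l2_inner_def)
  then have "(l2_norm ?d)\<^sup>2 \<le> e\<^sup>2" using F(2) r(2) by (simp add: dist_real_def l2_norm_square)
  then show ?thesis using F(1) e l2_norm_nonneg[of ?d] by (auto intro: power2_le_imp_le)
qed

lemma l2_functional_coefficients_square_sum_le: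
  assumes g: "bounded_linear_functional_on l2 l2_norm g"
    and C: "\<And>x. x \<in> l2 \<Longrightarrow> \<bar>g x\<bar> \<le> C * l2_norm x" and S: "finite S"
  shows "(\<Sum>j\<in>S. (g (coord_vector j))\<^sup>2) \<le> C\<^sup>2"
proof -
  define c where "c j = g (coord_vector j)" for j
  let ?s = "\<Sum>j\<in>S. (c j)\<^sup>2"
  have "g (truncate S c) = ?s"
    using bounded_linear_functional_truncate[OF linear_subspace_l2 coord_vector_in_l2 g S]
    by (simp add: c_def power2_eq_square)
  moreover have "truncate S c \<in> l2" "l2_norm (truncate S c) = sqrt ?s"
    using l2_finite_support[OF S, of "truncate S c"] by (auto simp: truncate_def l2_norm_def)
  ultimately have "?s \<le> C * sqrt ?s" using C[of "truncate S c"] by (metis abs_ge_self order_trans)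
  then have le: "sqrt ?s * sqrt ?s \<le> C * sqrt ?s" by (simp add: sum_nonneg)
  have "sqrt ?s \<le> \<bar>C\<bar>"
  proof (cases "sqrt ?s = 0")
    case False
    then have "0 < sqrt ?s" by (simp add: sum_nonneg order_less_le)
    then show ?thesis using le by (meson abs_ge_self mult_le_cancel_right_pos order_trans)
  qed simp
  then show ?thesis using sqrt_le_D unfolding c_def by fastforce
qed

lemma l2_tail_sums_of_functional:
  assumes g: "bounded_linear_functional_on l2 l2_norm g" and d: "d > 0"
  shows "\<exists>E. finite E \<and> (\<forall>z\<in>l2. \<forall>S. finite S \<and> S \<inter> E = {} \<longrightarrow>
           \<bar>\<Sum>j\<in>S. z j * g (coord_vector j)\<bar> \<le> d * l2_norm z)"
proof -
  obtain C where C: "\<And>x. x \<in> l2 \<Longrightarrow> \<bar>g x\<bar> \<le> C * l2_norm x"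
    using bounded_linear_functional_bound[OF g] by blast
  define c where "c j = g (coord_vector j)" for j
  have "(\<Sum>j\<in>S. (c j)\<^sup>2) \<le> C\<^sup>2" if "finite S" for S
    unfolding c_def using g C that by (rule l2_functional_coefficients_square_sum_le)
  then obtain E where E: "finite E" "\<And>S. finite S \<Longrightarrow> S \<inter> E = {} \<Longrightarrow> (\<Sum>j\<in>S. (c j)\<^sup>2) \<le> d\<^sup>2"
    using small_tail_sums[of "\<lambda>j. (c j)\<^sup>2" "C\<^sup>2" "d\<^sup>2"] d by auto
  have "\<bar>\<Sum>j\<in>S. z j * c j\<bar> \<le> d * l2_norm z" if z: "z \<in> l2" and S: "finite S" "S \<inter> E = {}" for z S
  proof -
    have "\<bar>\<Sum>j\<in>S. z j * c j\<bar> \<le> sqrt (\<Sum>j\<in>S. (z j)\<^sup>2) * sqrt (\<Sum>j\<in>S. (c j)\<^sup>2)"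
      using Cauchy_Schwarz_ineq_sum[of z c S] by (simp add: real_le_rsqrt flip: real_sqrt_mult)
    also have "\<dots> \<le> l2_norm z * d"
      using l2_finite_sum_le_norm[OF z S(1)] E(2)[OF S] d l2_norm_nonneg[of z]
      by (intro mult_mono) (auto intro: real_le_lsqrt less_imp_le simp: sum_nonneg)
    finally show ?thesis by (simp add: mult.commute)
  qed
  then show ?thesis using E(1) by (auto simp: c_def)
qed

lemma shrinking_sequence_space_l2: "shrinking_sequence_space l2 l2_norm"
  by (rule shrinking_sequence_spaceI[OF normed_space_on_l2 coord_vector_in_l2 l2_coordinate_le_norm
        l2_norm_truncate_diff_le l2_truncate_approx l2_tail_sums_of_functional])

lemma l2_norm_le_of_coordinatewise_limit:
  assumes w: "\<And>n. w n \<in> l2" "\<And>n. n \<ge> M \<Longrightarrow> l2_norm (w n) \<le> r"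
    and lim: "\<And>i. (\<lambda>n. w n i) \<longlonglongrightarrow> v i" and "0 \<le> r"
  shows "v \<in> l2" "l2_norm v \<le> r"
proof -
  have "(\<Sum>i\<in>F. (v i)\<^sup>2) \<le> r\<^sup>2" if F: "finite F" for F
  proof (rule LIMSEQ_le_const2)
    show "(\<lambda>n. \<Sum>i\<in>F. (w n i)\<^sup>2) \<longlonglongrightarrow> (\<Sum>i\<in>F. (v i)\<^sup>2)" by (intro tendsto_intros lim)
    have "(\<Sum>i\<in>F. (w n i)\<^sup>2) \<le> r\<^sup>2" if "n \<ge> M" for n
      using l2_finite_sum_le_norm[OF w(1) F, of n] w(2)[OF that] by (meson order_trans sqrt_le_D)
    then show "\<exists>N. \<forall>n\<ge>N. (\<Sum>i\<in>F. (w n i)\<^sup>2) \<le> r\<^sup>2" by blast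
  qed
  then show "v \<in> l2" "l2_norm v \<le> r" using l2_norm_le_of_finite_sums \<open>0 \<le> r\<close> by blast+
qed

lemma banach_space_on_l2: "banach_space_on l2 l2_norm"
proof (rule banach_space_onI[OF normed_space_on_l2])
  fix s :: "nat \<Rightarrow> 'i \<Rightarrow> real"
  assume s: "\<forall>n. s n \<in> l2" and cau: "\<forall>e>0. \<exists>M. \<forall>m\<ge>M. \<forall>n\<ge>M. l2_norm (vdiff (s m) (s n)) < e"
  define x where "x i = lim (\<lambda>n. s n i)" for i
  have x: "(\<lambda>n. s n i) \<longlonglongrightarrow> x i" for i
    unfolding x_def
    by (rule coordinatewise_limit_of_Cauchy[OF normed_space_on_l2 l2_coordinate_le_norm])
      (simp_all add: s cau)
  have "\<exists>M. \<forall>m\<ge>M. vdiff (s m) x \<in> l2 \<and> l2_norm (vdiff (s m) x) \<le> e" if "e > 0" for e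
  proof -
    obtain M where M: "\<forall>m\<ge>M. \<forall>n\<ge>M. l2_norm (vdiff (s m) (s n)) < e" using cau \<open>e > 0\<close> by blast
    have "vdiff (s m) x \<in> l2 \<and> l2_norm (vdiff (s m) x) \<le> e" if "m \<ge> M" for m
    proof -
      have w: "vdiff (s m) (s n) \<in> l2" for n using linear_subspace_diff[OF linear_subspace_l2] s by blast
      have close: "l2_norm (vdiff (s m) (s n)) \<le> e" if "n \<ge> M" for n
        using M \<open>m \<ge> M\<close> that by (simp add: less_imp_le)
      have lim: "(\<lambda>n. vdiff (s m) (s n) i) \<longlonglongrightarrow> vdiff (s m) x i" for i
        unfolding vdiff_def by (intro tendsto_intros x)
      show ?thesis using l2_norm_le_of_coordinatewise_limit[OF w close lim less_imp_le[OF \<open>e > 0\<close>]] by blast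
    qed
    then show ?thesis by blast
  qed
  then show "\<exists>x. \<forall>e>0. \<exists>M. \<forall>m\<ge>M. vdiff (s m) x \<in> l2 \<and> l2_norm (vdiff (s m) x) \<le> e" by blast
qed

lemma hilbert_space_on_l2: "hilbert_space_on l2 l2_inner"
  unfolding hilbert_space_on_def
proof (intro conjI ballI allI impI)
  show "banach_space_on l2 (\<lambda>x. sqrt (l2_inner x x))"
    using banach_space_on_l2 unfolding l2_norm_def[abs_def] .
  show "l2_inner x y = l2_inner y x" for x y by (rule l2_inner_commute)
qed (simp_all add: linear_subspace_l2 l2_inner_add_left l2_inner_scale_left
    l2_inner_self_nonneg l2_inner_self_eq_0)

section \<open>The Banach space \<open>c0\<close>\<close>

definition c0 :: "('i \<Rightarrow> real) set" where
  "c0 = {y. \<forall>e>0. finite {i. e \<le> \<bar>y i\<bar>}}"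

definition sup_norm :: "('i \<Rightarrow> real) \<Rightarrow> real" where
  "sup_norm y = (SUP i. \<bar>y i\<bar>)"

lemma c0_bdd_above: "y \<in> c0 \<Longrightarrow> bdd_above (range (\<lambda>i. \<bar>y i\<bar>))"
proof -
  assume "y \<in> c0"
  then have fin: "finite {i. 1 \<le> \<bar>y i\<bar>}" by (simp add: c0_def)
  have "\<bar>y i\<bar> \<le> max 1 (Max ((\<lambda>i. \<bar>y i\<bar>) ` {i. 1 \<le> \<bar>y i\<bar>}))" for i
    using fin by (cases "1 \<le> \<bar>y i\<bar>") (auto intro: le_max_iff_disj[THEN iffD2] Max_ge)
  then show ?thesis by (intro bdd_aboveI2)
qed

lemma c0_coordinate_le_sup_norm: "y \<in> c0 \<Longrightarrow> \<bar>y i\<bar> \<le> sup_norm y"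
  unfolding sup_norm_def by (rule cSUP_upper) (auto intro: c0_bdd_above)

lemma sup_norm_le: "(\<And>i. \<bar>y i\<bar> \<le> B) \<Longrightarrow> sup_norm y \<le> B"
  unfolding sup_norm_def by (rule cSUP_least) auto

lemma sup_norm_nonneg: "y \<in> c0 \<Longrightarrow> 0 \<le> sup_norm y"
  using c0_coordinate_le_sup_norm[of y undefined] by linarith

lemma c0_zero: "(\<lambda>t. 0) \<in> c0"
  by (simp add: c0_def not_le)

lemma c0_add:
  assumes "x \<in> c0" "y \<in> c0"
  shows "vadd x y \<in> c0"
  unfolding c0_def vadd_def
proof (intro CollectI allI impI)
  fix e :: real assume "e > 0"
  then have "e / 2 > 0" by simp
  then have "finite ({i. e / 2 \<le> \<bar>x i\<bar>} \<union> {i. e / 2 \<le> \<bar>y i\<bar>})"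
    using assms unfolding c0_def by blast
  moreover have "{i. e \<le> \<bar>x i + y i\<bar>} \<subseteq> {i. e / 2 \<le> \<bar>x i\<bar>} \<union> {i. e / 2 \<le> \<bar>y i\<bar>}" by auto
  ultimately show "finite {i. e \<le> \<bar>x i + y i\<bar>}" by (rule finite_subset[rotated])
qed

lemma c0_scale:
  assumes "x \<in> c0"
  shows "vscale c x \<in> c0"
  unfolding c0_def vscale_def
proof (intro CollectI allI impI)
  fix e :: real assume "e > 0"
  show "finite {i. e \<le> \<bar>c * x i\<bar>}"
  proof (cases "c = 0")
    case False
    then have "{i. e \<le> \<bar>c * x i\<bar>} = {i. e / \<bar>c\<bar> \<le> \<bar>x i\<bar>}" by (auto simp: abs_mult field_simps)
    then show ?thesis using assms \<open>e > 0\<close> False by (simp add: c0_def)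
  qed (use \<open>e > 0\<close> in \<open>simp add: not_le\<close>)
qed

lemma linear_subspace_c0: "linear_subspace c0"
  unfolding linear_subspace_def using c0_zero c0_add c0_scale by blast

lemma sup_norm_scale:
  assumes x: "x \<in> c0"
  shows "sup_norm (vscale c x) = \<bar>c\<bar> * sup_norm x"
proof (rule antisym)
  show "sup_norm (vscale c x) \<le> \<bar>c\<bar> * sup_norm x"
    by (rule sup_norm_le) (simp add: vscale_def abs_mult c0_coordinate_le_sup_norm[OF x] mult_left_mono)
  show "\<bar>c\<bar> * sup_norm x \<le> sup_norm (vscale c x)"
  proof (cases "c = 0")
    case False
    have "\<bar>x i\<bar> \<le> sup_norm (vscale c x) / \<bar>c\<bar>" for i
      using c0_coordinate_le_sup_norm[OF c0_scale[OF x], of c i] False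
      by (simp add: vscale_def abs_mult field_simps)
    then have "sup_norm x \<le> sup_norm (vscale c x) / \<bar>c\<bar>" by (rule sup_norm_le)
    then show ?thesis using False by (simp add: field_simps)
  qed (simp add: sup_norm_nonneg c0_scale x)
qed

lemma normed_space_on_c0: "normed_space_on c0 sup_norm"
  unfolding normed_space_on_def
proof (intro conjI ballI allI impI)
  show "x = (\<lambda>t. 0)" if "x \<in> c0" "sup_norm x = 0" for x
    using c0_coordinate_le_sup_norm[OF that(1)] that(2) by fastforce
  show "sup_norm (vadd x y) \<le> sup_norm x + sup_norm y" if "x \<in> c0" "y \<in> c0" for x y
  proof (rule sup_norm_le)
    fix i
    have "\<bar>x i + y i\<bar> \<le> \<bar>x i\<bar> + \<bar>y i\<bar>" by (rule abs_triangle_ineq)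
    also have "\<dots> \<le> sup_norm x + sup_norm y"
      using c0_coordinate_le_sup_norm that by (intro add_mono)
    finally show "\<bar>vadd x y i\<bar> \<le> sup_norm x + sup_norm y" by (simp add: vadd_def)
  qed
qed (simp_all add: linear_subspace_c0 sup_norm_nonneg sup_norm_scale)

lemma coord_vector_in_c0: "coord_vector j \<in> c0"
  unfolding c0_def
proof (intro CollectI allI impI)
  fix e :: real assume "e > 0"
  then have "{i. e \<le> \<bar>coord_vector j i\<bar>} \<subseteq> {j}" by (auto simp: coord_vector_def)
  then show "finite {i. e \<le> \<bar>coord_vector j i\<bar>}" by (rule finite_subset) simp
qed

lemma sup_norm_truncate_diff_le: "y \<in> c0 \<Longrightarrow> sup_norm (vdiff y (truncate E y)) \<le> sup_norm y"
  by (rule sup_norm_le) (auto simp: vdiff_def truncate_def c0_coordinate_le_sup_norm sup_norm_nonneg)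

lemma c0_truncate_approx:
  assumes "y \<in> c0" "e > 0"
  shows "\<exists>F. finite F \<and> sup_norm (vdiff y (truncate F y)) \<le> e"
proof (intro exI conjI)
  show "finite {i. e \<le> \<bar>y i\<bar>}" using assms by (simp add: c0_def)
  show "sup_norm (vdiff y (truncate {i. e \<le> \<bar>y i\<bar>} y)) \<le> e"
    by (rule sup_norm_le) (use assms in \<open>auto simp: vdiff_def truncate_def\<close>)
qed

lemma c0_functional_coefficients_abs_sum_le:
  assumes g: "bounded_linear_functional_on c0 sup_norm g"
    and C: "\<And>x. x \<in> c0 \<Longrightarrow> \<bar>g x\<bar> \<le> C * sup_norm x" and S: "finite S"
  shows "(\<Sum>j\<in>S. \<bar>g (coord_vector j)\<bar>) \<le> \<bar>C\<bar>"
proof -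
  let ?v = "truncate S (\<lambda>j. sgn (g (coord_vector j)))"
  have v: "?v \<in> c0" using linear_subspace_c0 coord_vector_in_c0 S by (rule truncate_in_subspace)
  have "g ?v = (\<Sum>j\<in>S. \<bar>g (coord_vector j)\<bar>)"
    using bounded_linear_functional_truncate[OF linear_subspace_c0 coord_vector_in_c0 g S]
    by (simp add: truncate_def mult.commute[of "sgn _"] linordered_idom_class.abs_sgn)
  moreover have "C * sup_norm ?v \<le> \<bar>C\<bar>"
  proof -
    have le1: "sup_norm ?v \<le> 1" by (rule sup_norm_le) (simp add: truncate_def abs_sgn_eq)
    have "C * sup_norm ?v \<le> \<bar>C\<bar> * sup_norm ?v"
      using abs_ge_self sup_norm_nonneg[OF v] by (rule mult_right_mono)
    also have "\<dots> \<le> \<bar>C\<bar>" using le1 by (simp add: mult_left_le)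
    finally show ?thesis .
  qed
  ultimately show ?thesis using C[OF v] by simp
qed

lemma c0_tail_sums_of_functional:
  assumes g: "bounded_linear_functional_on c0 sup_norm g" and d: "d > 0"
  shows "\<exists>E. finite E \<and> (\<forall>z\<in>c0. \<forall>S. finite S \<and> S \<inter> E = {} \<longrightarrow>
           \<bar>\<Sum>j\<in>S. z j * g (coord_vector j)\<bar> \<le> d * sup_norm z)"
proof -
  obtain C where C: "\<And>x. x \<in> c0 \<Longrightarrow> \<bar>g x\<bar> \<le> C * sup_norm x"
    using bounded_linear_functional_bound[OF g] by blast
  define c where "c j = g (coord_vector j)" for j
  have "(\<Sum>j\<in>S. \<bar>c j\<bar>) \<le> \<bar>C\<bar>" if "finite S" for S
    unfolding c_def using g C that by (rule c0_functional_coefficients_abs_sum_le)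
  then obtain E where E: "finite E" "\<And>S. finite S \<Longrightarrow> S \<inter> E = {} \<Longrightarrow> (\<Sum>j\<in>S. \<bar>c j\<bar>) \<le> d"
    using small_tail_sums[of "\<lambda>j. \<bar>c j\<bar>" "\<bar>C\<bar>" d] d by auto
  have "\<bar>\<Sum>j\<in>S. z j * c j\<bar> \<le> d * sup_norm z" if z: "z \<in> c0" and S: "finite S" "S \<inter> E = {}" for z S
  proof -
    have "\<bar>\<Sum>j\<in>S. z j * c j\<bar> \<le> (\<Sum>j\<in>S. sup_norm z * \<bar>c j\<bar>)"
      using c0_coordinate_le_sup_norm[OF z]
      by (intro order_trans[OF sum_abs] sum_mono) (simp add: abs_mult mult_right_mono)
    also have "\<dots> \<le> sup_norm z * d"
      unfolding sum_distrib_left[symmetric] using E(2)[OF S] sup_norm_nonneg[OF z] by (rule mult_left_mono)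
    finally show ?thesis by (simp add: mult.commute)
  qed
  then show ?thesis using E(1) by (auto simp: c_def)
qed

lemma shrinking_sequence_space_c0: "shrinking_sequence_space c0 sup_norm"
  by (rule shrinking_sequence_spaceI[OF normed_space_on_c0 coord_vector_in_c0 c0_coordinate_le_sup_norm
        sup_norm_truncate_diff_le c0_truncate_approx c0_tail_sums_of_functional])

lemma c0_uniform_limit:
  assumes "\<And>e. e > 0 \<Longrightarrow> \<exists>v\<in>c0. \<forall>i. \<bar>v i - x i\<bar> \<le> e"
  shows "x \<in> c0"
  unfolding c0_def
proof (intro CollectI allI impI)
  fix e :: real assume "e > 0"
  then have "e / 2 > 0" by simp
  then obtain v where v: "v \<in> c0" "\<And>i. \<bar>v i - x i\<bar> \<le> e / 2" using assms by blast
  have "{i. e \<le> \<bar>x i\<bar>} \<subseteq> {i. e / 2 \<le> \<bar>v i\<bar>}"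
  proof
    fix i assume "i \<in> {i. e \<le> \<bar>x i\<bar>}"
    then show "i \<in> {i. e / 2 \<le> \<bar>v i\<bar>}" using v(2)[of i] by (auto simp: abs_if split: if_splits)
  qed
  moreover have "finite {i. e / 2 \<le> \<bar>v i\<bar>}" using v(1) \<open>e / 2 > 0\<close> unfolding c0_def by blast
  ultimately show "finite {i. e \<le> \<bar>x i\<bar>}" by (rule finite_subset)
qed

lemma c0_Cauchy_limit_close:
  assumes s: "\<forall>n. s n \<in> c0" and M: "\<forall>m\<ge>M. \<forall>n\<ge>M. sup_norm (vdiff (s m) (s n)) < e"
    and x: "\<And>i. (\<lambda>n. s n i) \<longlonglongrightarrow> x i" and "m \<ge> M"
  shows "\<bar>s m i - x i\<bar> \<le> e"
proof (rule LIMSEQ_le_const2)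
  show "(\<lambda>n. \<bar>s m i - s n i\<bar>) \<longlonglongrightarrow> \<bar>s m i - x i\<bar>" by (intro tendsto_intros x)
  have "\<bar>s m i - s n i\<bar> \<le> e" if "n \<ge> M" for n
    using c0_coordinate_le_sup_norm[OF linear_subspace_diff[OF linear_subspace_c0], of "s m" "s n" i]
      s M \<open>m \<ge> M\<close> that by (fastforce simp: vdiff_def)
  then show "\<exists>N. \<forall>n\<ge>N. \<bar>s m i - s n i\<bar> \<le> e" by blast
qed

lemma banach_space_on_c0: "banach_space_on c0 sup_norm"
proof (rule banach_space_onI[OF normed_space_on_c0])
  fix s :: "nat \<Rightarrow> 'i \<Rightarrow> real"
  assume s: "\<forall>n. s n \<in> c0" and cau: "\<forall>e>0. \<exists>M. \<forall>m\<ge>M. \<forall>n\<ge>M. sup_norm (vdiff (s m) (s n)) < e"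
  define x where "x i = lim (\<lambda>n. s n i)" for i
  have x: "(\<lambda>n. s n i) \<longlonglongrightarrow> x i" for i
    unfolding x_def
    by (rule coordinatewise_limit_of_Cauchy[OF normed_space_on_c0 c0_coordinate_le_sup_norm])
      (simp_all add: s cau)
  have close: "\<exists>M. \<forall>m\<ge>M. \<forall>i. \<bar>s m i - x i\<bar> \<le> e" if "e > 0" for e
  proof -
    obtain M where M: "\<forall>m\<ge>M. \<forall>n\<ge>M. sup_norm (vdiff (s m) (s n)) < e" using cau \<open>e > 0\<close> by blast
    then show ?thesis using s x by (blast intro: c0_Cauchy_limit_close)
  qed
  have xc: "x \<in> c0"
  proof (rule c0_uniform_limit)
    fix e :: real assume "e > 0"
    then obtain M where "\<forall>i. \<bar>s M i - x i\<bar> \<le> e" using close by blast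
    then show "\<exists>v\<in>c0. \<forall>i. \<bar>v i - x i\<bar> \<le> e" using s by blast
  qed
  have "\<exists>M. \<forall>m\<ge>M. vdiff (s m) x \<in> c0 \<and> sup_norm (vdiff (s m) x) \<le> e" if "e > 0" for e
  proof -
    obtain M where M: "\<forall>m\<ge>M. \<forall>i. \<bar>s m i - x i\<bar> \<le> e" using close \<open>e > 0\<close> by blast
    have "vdiff (s m) x \<in> c0" for m using linear_subspace_diff[OF linear_subspace_c0 _ xc] s by blast
    moreover have "sup_norm (vdiff (s m) x) \<le> e" if "m \<ge> M" for m
      using M that by (intro sup_norm_le) (simp add: vdiff_def)
    ultimately show ?thesis by blast
  qed
  then show "\<exists>x. \<forall>e>0. \<exists>M. \<forall>m\<ge>M. vdiff (s m) x \<in> c0 \<and> sup_norm (vdiff (s m) x) \<le> e" by blast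
qed

section \<open>The compact set of centred weighted families\<close>

definition level :: "(nat \<Rightarrow> 'a set set) \<Rightarrow> 'a set \<Rightarrow> nat" where
  "level F U = (LEAST n. U \<in> F n)"

definition weight :: "(nat \<Rightarrow> 'a set set) \<Rightarrow> 'a set \<Rightarrow> real" where
  "weight F U = (if U \<in> (\<Union>n. F n) then (1 / 2) ^ level F U else 0)"

definition centred :: "'a set set \<Rightarrow> bool" where
  "centred \<U> \<longleftrightarrow> (\<forall>D. D \<subseteq> \<U> \<and> finite D \<longrightarrow> \<Inter>D \<noteq> {})"

definition centred_box :: "(nat \<Rightarrow> 'a set set) \<Rightarrow> ('a set \<Rightarrow> real) set" where
  "centred_box F = {y. (\<forall>U. 0 \<le> y U \<and> y U \<le> weight F U) \<and> centred {U. y U \<noteq> 0}}"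

lemma level_mem: "U \<in> (\<Union>n. F n) \<Longrightarrow> U \<in> F (level F U)"
  unfolding level_def by (auto intro: LeastI)

lemma weight_nonneg: "0 \<le> weight F U"
  by (simp add: weight_def)

lemma weight_le_1: "weight F U \<le> 1"
  by (simp add: weight_def power_le_one)

lemma centred_boxD:
  assumes "y \<in> centred_box F"
  shows "0 \<le> y U" "y U \<le> weight F U" "centred {U. y U \<noteq> 0}"
  using assms unfolding centred_box_def by blast+

lemma centred_box_support:
  assumes "y \<in> centred_box F" "y U \<noteq> 0"
  shows "U \<in> (\<Union>n. F n)" "y U \<le> (1 / 2) ^ level F U"
  using centred_boxD(1,2)[OF assms(1), of U] assms(2) by (auto simp: weight_def split: if_splits)

lemma closedin_centred_support:
  "closedin (product_topology (\<lambda>_. euclideanreal) UNIV) {y :: 'a set \<Rightarrow> real. centred {U. y U \<noteq> 0}}"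
proof -
  let ?P = "product_topology (\<lambda>_::'a set. euclideanreal) UNIV"
  have "openin ?P (UNIV - {y. centred {U. y U \<noteq> 0}})"
  proof (subst openin_subopen, intro ballI)
    fix y :: "'a set \<Rightarrow> real" assume "y \<in> UNIV - {y. centred {U. y U \<noteq> 0}}"
    then obtain D where D: "finite D" "D \<subseteq> {U. y U \<noteq> 0}" "\<Inter>D = {}"
      unfolding centred_def by blast
    define T where "T = PiE UNIV (\<lambda>U :: 'a set. if U \<in> D then - {0::real} else UNIV)"
    have "openin ?P T" unfolding T_def
      by (subst openin_PiE_gen) (use D(1) in \<open>auto intro: finite_subset\<close>)
    moreover have "y \<in> T" using D(2) by (auto simp: T_def PiE_UNIV_domain)
    moreover have "T \<subseteq> UNIV - {y. centred {U. y U \<noteq> 0}}"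
    proof
      fix z assume "z \<in> T"
      then have "z U \<noteq> 0" if "U \<in> D" for U
        using that by (auto simp: T_def PiE_UNIV_domain Pi_iff dest: spec[of _ U])
      then show "z \<in> UNIV - {y. centred {U. y U \<noteq> 0}}" using D(1,3) unfolding centred_def by blast
    qed
    ultimately show "\<exists>T. openin ?P T \<and> y \<in> T \<and> T \<subseteq> UNIV - {y. centred {U. y U \<noteq> 0}}" by blast
  qed
  then show ?thesis by (simp add: closedin_def)
qed

lemma compactin_centred_box:
  "compactin (product_topology (\<lambda>_. euclideanreal) UNIV) (centred_box F)"
proof -
  let ?P = "product_topology (\<lambda>_::'a set. euclideanreal) UNIV"
  let ?B = "PiE UNIV (\<lambda>U. {0..weight F U})"
  have B: "compactin ?P ?B" by (subst compactin_PiE) simp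
  then have "closedin ?P ?B"
    by (rule compactin_imp_closedin[rotated]) (simp add: Hausdorff_space_product_topology)
  then have "closedin ?P (?B \<inter> {y. centred {U. y U \<noteq> 0}})"
    using closedin_centred_support by (rule closedin_Int)
  moreover have "centred_box F = ?B \<inter> {y. centred {U. y U \<noteq> 0}}"
    unfolding centred_box_def PiE_UNIV_domain by (auto simp: Pi_iff)
  ultimately show ?thesis using closed_compactin[OF B] by auto
qed

lemma inj_on_level_centred_support:
  assumes F: "\<And>n. disjoint (F n)" and y: "y \<in> centred_box F"
  shows "inj_on (level F) {U. y U \<noteq> 0}"
proof (rule inj_onI, rule ccontr)
  fix U U' assume U: "U \<in> {U. y U \<noteq> 0}" and U': "U' \<in> {U. y U \<noteq> 0}"
    and eq: "level F U = level F U'" and "U \<noteq> U'"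
  have "U \<in> (\<Union>n. F n)" "U' \<in> (\<Union>n. F n)" using centred_box_support(1)[OF y] U U' by auto
  then have "U \<in> F (level F U)" "U' \<in> F (level F U)" using level_mem eq by metis+
  then have "U \<inter> U' = {}"
    using F[of "level F U"] \<open>U \<noteq> U'\<close> unfolding disjoint_def pairwise_def disjnt_def by blast
  moreover have "\<Inter>{U, U'} \<noteq> {}"
    using centred_boxD(3)[OF y, unfolded centred_def, rule_format, of "{U, U'}"] U U' by simp
  ultimately show False by simp
qed

lemma centred_box_subset_l2:
  assumes F: "\<And>n. disjoint (F n)" and y: "y \<in> centred_box F"
  shows "y \<in> l2" "l2_norm y \<le> 2"
proof -
  have "(\<Sum>U\<in>S. (y U)\<^sup>2) \<le> 2\<^sup>2" if S: "finite S" for S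
  proof -
    let ?S = "{U\<in>S. y U \<noteq> 0}"
    have "(\<Sum>U\<in>S. (y U)\<^sup>2) = (\<Sum>U\<in>?S. (y U)\<^sup>2)"
      by (rule sum.mono_neutral_right) (auto simp: S)
    also have "\<dots> \<le> (\<Sum>U\<in>?S. (1 / 4) ^ level F U)"
    proof (rule sum_mono)
      fix U assume "U \<in> ?S"
      then have "y U \<le> (1 / 2) ^ level F U" using centred_box_support(2)[OF y] by blast
      then have "(y U)\<^sup>2 \<le> ((1 / 2) ^ level F U)\<^sup>2"
        using centred_boxD(1)[OF y] by (intro power_mono) auto
      also have "((1 / 2) ^ level F U)\<^sup>2 = (1 / 4 :: real) ^ level F U"
        by (simp add: power2_eq_square flip: power_mult_distrib)
      finally show "(y U)\<^sup>2 \<le> (1 / 4) ^ level F U" .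
    qed
    also have "\<dots> = (\<Sum>n\<in>level F ` ?S. (1 / 4) ^ n)"
      using inj_on_level_centred_support[OF F y] by (intro sum.reindex[symmetric, unfolded o_def]) (auto intro: inj_on_subset)
    also have "\<dots> \<le> (\<Sum>n. (1 / 4 :: real) ^ n)"
      using S by (intro sum_le_suminf summable_geometric) auto
    also have "\<dots> \<le> 2\<^sup>2" by (subst suminf_geometric) simp_all
    finally show ?thesis .
  qed
  then show "y \<in> l2" "l2_norm y \<le> 2" using l2_norm_le_of_finite_sums[of y 2] by simp_all
qed

lemma finite_centred_support_level:
  assumes "strongly_point_finite (F n)" and y: "y \<in> centred_box F"
  shows "finite {U \<in> F n. y U \<noteq> 0}"
proof (rule ccontr)
  assume "infinite {U \<in> F n. y U \<noteq> 0}"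
  then obtain C where C: "C \<subseteq> {U \<in> F n. y U \<noteq> 0}" "countable C" "infinite C"
    using infinite_countable_subset' by blast
  moreover have "C \<subseteq> F n" using C(1) by blast
  ultimately obtain D where D: "D \<subseteq> C" "finite D" "\<Inter>D = {}"
    using assms(1)[unfolded strongly_point_finite_def, rule_format, of C] by blast
  then show False using centred_boxD(3)[OF y] C(1) unfolding centred_def by blast
qed

lemma centred_box_subset_c0:
  assumes F: "\<And>n. strongly_point_finite (F n)" and y: "y \<in> centred_box F"
  shows "y \<in> c0" "sup_norm y \<le> 1"
proof -
  show "y \<in> c0" unfolding c0_def
  proof (intro CollectI allI impI)
    fix e :: real assume "e > 0"
    then obtain m where m: "(1 / 2 :: real) ^ m < e" using real_arch_pow_inv[of e "1 / 2"] by auto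
    have "{U. e \<le> \<bar>y U\<bar>} \<subseteq> (\<Union>n<m. {U \<in> F n. y U \<noteq> 0})"
    proof
      fix U assume "U \<in> {U. e \<le> \<bar>y U\<bar>}"
      then have yU: "e \<le> y U" "y U \<noteq> 0" using centred_boxD(1)[OF y, of U] \<open>e > 0\<close> by auto
      then have "e \<le> (1 / 2) ^ level F U" using centred_box_support(2)[OF y] by fastforce
      then have "(1 / 2) ^ m < (1 / 2 :: real) ^ level F U" using m by linarith
      then have "level F U < m" by (simp add: power_strict_decreasing_iff)
      then show "U \<in> (\<Union>n<m. {U \<in> F n. y U \<noteq> 0})"
        using level_mem[OF centred_box_support(1)[OF y yU(2)]] yU(2) by blast
    qed
    moreover have "finite (\<Union>n<m. {U \<in> F n. y U \<noteq> 0})"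
      using finite_centred_support_level[OF F y] by blast
    ultimately show "finite {U. e \<le> \<bar>y U\<bar>}" by (rule finite_subset)
  qed
  show "sup_norm y \<le> 1"
  proof (rule sup_norm_le)
    fix U show "\<bar>y U\<bar> \<le> 1" using centred_boxD(1,2)[OF y, of U] weight_le_1[of F U] by simp
  qed
qed

section \<open>The embedding by weighted cozero functions\<close>

definition cozero_function :: "'a topology \<Rightarrow> 'a set \<Rightarrow> 'a \<Rightarrow> real" where
  "cozero_function X U = (SOME f. continuous_map X (top_of_set {0..1}) f \<and>
     U = topspace X - {x \<in> topspace X. f x = 0})"

lemma cozero_function:
  assumes "cozero_set X U"
  shows "continuous_map X (top_of_set {0..1}) (cozero_function X U)"
    and "U = topspace X - {x \<in> topspace X. cozero_function X U x = 0}"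
  using someI_ex[OF assms[unfolded cozero_set_def]] unfolding cozero_function_def by blast+

lemma cozero_function_range:
  assumes "cozero_set X U" "x \<in> topspace X"
  shows "cozero_function X U x \<in> {0..1}"
  using continuous_map_image_subset_topspace[OF cozero_function(1)[OF assms(1)]] assms(2) by auto

definition cozero_embedding :: "'a topology \<Rightarrow> (nat \<Rightarrow> 'a set set) \<Rightarrow> 'a \<Rightarrow> 'a set \<Rightarrow> real" where
  "cozero_embedding X F x = (\<lambda>U. weight F U * cozero_function X U x)"

context
  fixes X :: "'a topology" and F :: "nat \<Rightarrow> 'a set set"
  assumes base: "is_base X (\<Union>n. F n)" and cozero: "\<And>U. U \<in> (\<Union>n. F n) \<Longrightarrow> cozero_set X U"
begin

lemma cozero_embedding_pos_iff:
  assumes "x \<in> topspace X"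
  shows "0 < cozero_embedding X F x U \<longleftrightarrow> U \<in> (\<Union>n. F n) \<and> x \<in> U"
proof (cases "U \<in> (\<Union>n. F n)")
  case True
  have "0 < weight F U" using True by (simp add: weight_def)
  moreover have "0 \<le> cozero_function X U x" using cozero_function_range[OF cozero[OF True] assms] by simp
  moreover have "x \<in> U \<longleftrightarrow> cozero_function X U x \<noteq> 0"
    using cozero_function(2)[OF cozero[OF True]] assms by blast
  ultimately show ?thesis using True by (auto simp: cozero_embedding_def zero_less_mult_iff)
qed (simp add: cozero_embedding_def weight_def)

lemma continuous_map_cozero_embedding:
  "continuous_map X (product_topology (\<lambda>_. euclideanreal) UNIV) (cozero_embedding X F)"
  unfolding continuous_map_componentwise_UNIV
proof
  fix U
  show "continuous_map X euclideanreal (\<lambda>x. cozero_embedding X F x U)"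
  proof (cases "U \<in> (\<Union>n. F n)")
    case True
    then have "continuous_map X euclideanreal (cozero_function X U)"
      using cozero_function(1)[OF cozero] by (simp add: continuous_map_in_subtopology)
    then show ?thesis unfolding cozero_embedding_def by (rule continuous_map_real_mult_left)
  qed (simp add: cozero_embedding_def weight_def)
qed

lemma cozero_embedding_in_centred_box: "cozero_embedding X F ` topspace X \<subseteq> centred_box F"
proof
  fix w assume "w \<in> cozero_embedding X F ` topspace X"
  then obtain x where x: "x \<in> topspace X" and w: "w = cozero_embedding X F x" by blast
  have "0 \<le> w U \<and> w U \<le> weight F U" for U
  proof (cases "U \<in> (\<Union>n. F n)")
    case True
    have "cozero_function X U x \<in> {0..1}" using cozero[OF True] x by (rule cozero_function_range)
    then show ?thesis using weight_nonneg[of F U] by (simp add: w cozero_embedding_def mult_left_le)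
  qed (simp add: w cozero_embedding_def weight_def)
  moreover have "x \<in> \<Inter>{U. w U \<noteq> 0}"
    using cozero_embedding_pos_iff[OF x] calculation by (force simp: w order_less_le)
  ultimately show "w \<in> centred_box F" unfolding centred_box_def centred_def by blast
qed

lemma cozero_embedding_separates:
  assumes "openin X U" "x \<in> U"
  shows "\<exists>V. 0 < cozero_embedding X F x V \<and>
    (\<forall>y\<in>topspace X. 0 < cozero_embedding X F y V \<longrightarrow> y \<in> U)"
proof -
  obtain \<V> where "\<V> \<subseteq> (\<Union>n. F n)" "\<Union>\<V> = U" using base assms(1) unfolding is_base_def by blast
  then obtain V where V: "V \<in> (\<Union>n. F n)" "x \<in> V" "V \<subseteq> U" using assms(2) by blast
  have "x \<in> topspace X" using assms openin_subset by blast
  then show ?thesis using V by (intro exI[of _ V]) (auto simp: cozero_embedding_pos_iff)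
qed

lemma inj_on_cozero_embedding:
  assumes "Hausdorff_space X"
  shows "inj_on (cozero_embedding X F) (topspace X)"
proof (rule inj_onI, rule ccontr)
  fix x y assume x: "x \<in> topspace X" and y: "y \<in> topspace X"
    and eq: "cozero_embedding X F x = cozero_embedding X F y" and "x \<noteq> y"
  then obtain U V where "openin X U" "openin X V" "x \<in> U" "y \<in> V" "disjnt U V"
    using assms unfolding Hausdorff_space_def by blast
  then obtain W where "0 < cozero_embedding X F x W" "\<forall>z\<in>topspace X. 0 < cozero_embedding X F z W \<longrightarrow> z \<in> U"
    using cozero_embedding_separates by blast
  then show False using eq y \<open>y \<in> V\<close> \<open>disjnt U V\<close> by (auto simp: disjnt_def)
qed

lemma embedding_into_weakly_compact:
  assumes "Hausdorff_space X" and S: "shrinking_sequence_space V N"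
    and K: "centred_box F \<subseteq> V" "\<And>y. y \<in> centred_box F \<Longrightarrow> N y \<le> R"
  shows "\<exists>K f. K \<subseteq> V \<and> compactin (weak_topology V N) K \<and>
           embedding_map X (subtopology (weak_topology V N) K) f"
proof (intro exI conjI)
  let ?P = "product_topology (\<lambda>_::'a set. euclideanreal) UNIV"
  show "compactin (weak_topology V N) (centred_box F)"
    using S K compactin_centred_box by (rule compactin_weak_topology)
  have "continuous_map X (subtopology ?P (centred_box F)) (cozero_embedding X F)"
    using continuous_map_cozero_embedding cozero_embedding_in_centred_box
    by (auto simp: continuous_map_in_subtopology)
  then have "continuous_map X (weak_topology V N) (cozero_embedding X F)"
    using continuous_map_compose[OF _ continuous_map_id_weak_topology[OF S K]] by (simp add: o_def)
  moreover have "openin (weak_topology V N) {v \<in> topspace (weak_topology V N). 0 < v i}" for i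
    using openin_weak_topology_functional[OF bounded_linear_functional_coordinate, of V i N "{0<..}"]
      shrinking_sequence_spaceD(4)[OF S] by simp
  ultimately show "embedding_map X (subtopology (weak_topology V N) (centred_box F)) (cozero_embedding X F)"
    using cozero_embedding_in_centred_box K(1) cozero_embedding_separates
      inj_on_cozero_embedding[OF assms(1)]
    by (intro embedding_map_by_positive_coordinates) auto
qed (rule K(1))

end

lemma embeds_in_uniform_eberlein_compact_of_disjoint_levels:
  fixes F :: "nat \<Rightarrow> 'a set set"
  assumes "Hausdorff_space X" "is_base X (\<Union>n. F n)" "\<forall>U\<in>\<Union>n. F n. cozero_set X U"
    and F: "\<And>n. disjoint (F n)"
  shows "embeds_in_uniform_eberlein_compact X"
proof -
  have "\<exists>(K :: ('a set \<Rightarrow> real) set) f. K \<subseteq> l2 \<and> compactin (weak_topology l2 l2_norm) K \<and>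
      embedding_map X (subtopology (weak_topology l2 l2_norm) K) f"
    by (rule embedding_into_weakly_compact[OF assms(2) assms(3)[rule_format] assms(1)
          shrinking_sequence_space_l2 subsetI[OF centred_box_subset_l2(1)[of F, OF F]]
          centred_box_subset_l2(2)[of F, OF F]])
  then obtain K :: "('a set \<Rightarrow> real) set" and f where K: "K \<subseteq> l2"
    "compactin (weak_topology l2 l2_norm) K" "embedding_map X (subtopology (weak_topology l2 l2_norm) K) f"
    by blast
  show ?thesis
    unfolding embeds_in_uniform_eberlein_compact_def
    using hilbert_space_on_l2 K[unfolded l2_norm_def[abs_def]]
    by (intro exI[of _ l2] exI[of _ l2_inner] exI[of _ K] exI[of _ f]) simp
qed

lemma embeds_in_eberlein_compact_of_strongly_point_finite_levels:
  fixes F :: "nat \<Rightarrow> 'a set set"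
  assumes "Hausdorff_space X" "is_base X (\<Union>n. F n)" "\<forall>U\<in>\<Union>n. F n. cozero_set X U"
    and F: "\<And>n. strongly_point_finite (F n)"
  shows "embeds_in_eberlein_compact X"
proof -
  have "\<exists>(K :: ('a set \<Rightarrow> real) set) f. K \<subseteq> c0 \<and> compactin (weak_topology c0 sup_norm) K \<and>
      embedding_map X (subtopology (weak_topology c0 sup_norm) K) f"
    by (rule embedding_into_weakly_compact[OF assms(2) assms(3)[rule_format] assms(1)
          shrinking_sequence_space_c0 subsetI[OF centred_box_subset_c0(1)[of F, OF F]]
          centred_box_subset_c0(2)[of F, OF F]])
  then show ?thesis unfolding embeds_in_eberlein_compact_def using banach_space_on_c0 by blast
qed

theorem theorem5p2:
  fixes X :: "'a topology"
  assumes "tychonoff_space X"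
  shows "((\<exists>B. is_base X B \<and> (\<forall>U\<in>B. cozero_set X U) \<and> sigma_disjoint B)
            \<longrightarrow> embeds_in_uniform_eberlein_compact X)
       \<and> ((\<exists>B. is_base X B \<and> (\<forall>U\<in>B. cozero_set X U) \<and> sigma_strongly_point_finite B)
            \<longrightarrow> embeds_in_eberlein_compact X)"
proof (intro conjI impI)
  have X: "Hausdorff_space X" using assms by (simp add: tychonoff_space_def)
  show "embeds_in_uniform_eberlein_compact X"
    if base: "\<exists>B. is_base X B \<and> (\<forall>U\<in>B. cozero_set X U) \<and> sigma_disjoint B"
  proof -
    obtain B where B: "is_base X B" "\<forall>U\<in>B. cozero_set X U" "sigma_disjoint B" using base by blast
    then obtain F :: "nat \<Rightarrow> 'a set set" where "B = (\<Union>n. F n)" "\<And>n. disjoint (F n)"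
      unfolding sigma_disjoint_def by blast
    then show ?thesis using X B by (intro embeds_in_uniform_eberlein_compact_of_disjoint_levels) auto
  qed
  show "embeds_in_eberlein_compact X"
    if base: "\<exists>B. is_base X B \<and> (\<forall>U\<in>B. cozero_set X U) \<and> sigma_strongly_point_finite B"
  proof -
    obtain B where B: "is_base X B" "\<forall>U\<in>B. cozero_set X U" "sigma_strongly_point_finite B"
      using base by blast
    then obtain F :: "nat \<Rightarrow> 'a set set" where "B = (\<Union>n. F n)" "\<And>n. strongly_point_finite (F n)"
      unfolding sigma_strongly_point_finite_def by blast
    then show ?thesis
      using X B by (intro embeds_in_eberlein_compact_of_strongly_point_finite_levels) auto
  qed
qed

end
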